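(* The functor $\widetilde S(\ ):\mathbf{Gpd}\to(t\mathbf{ASmd})_0$ is an equivalence of categories. Moreover, $\widetilde R(\ ):(t\mathbf{ASmd})_0\to\mathbf{Gpd}$ is right adjoint to $\widetilde S(\ )$.
   Context: Write $s(f),t(f)$ for source and target. A quasi-schemoid is a pair $(\mathcal C,S)$ with $\mathcal C$ a small category and $S$ a partition of $mor(\mathcal C)$ into nonempty blocks such that for all $\sigma,\tau,\mu\in S$ and $f,g\in\mu$ the sets $\{(a,b)\in\sigma\times\tau: s(a)=t(b), a\circ b=f\}$ and the analogous set for $g$ have equal cardinality, denoted $p^\mu_{\sigma\tau}$. An association schemoid is a triple $(\mathcal C,S,T)$ where $(\mathcal C,S)$ is a quasi-schemoid, every block containing an endomorphism consists only of endomorphisms, and $T$ is a contravariant endofunctor with $T^2=\mathrm{id}$ and $\{T(f):f\in\sigma\}\in S$ for all $\sigma$. A morphism of association schemoids is a functor mapping each block into a block and commuting with the $T$'s. With $J_0=\{1_x\}$, it is unital if every block meeting $J_0$ lies in $J_0$. A unital association schemoid is semi-thin if (i) $\#\{f\in\sigma:s(f)=x\}\le1$ for all $\sigma,x$, and (ii) $\mathcal C$ is a groupoid with $T(f)=f^{-1}$. $S_0=\{\alpha\in S:\alpha\cap J_0\ne\emptyset\}$. A semi-thin schemoid is thin with set of base points $V\subseteq ob(\mathcal C)$ if (iii) $\#\mathrm{Hom}(x,y)\le1$ for all $x,y$, and (iv) every connected component contains exactly one element of $V$ and $V\to S_0$, $v\mapsto$ (block containing $1_v$), is bijective. $(t\mathbf{ASmd})_0$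 is the category whose objects are thin association schemoids with base points and whose morphisms are morphisms of association schemoids sending base points to base points. $\mathbf{Gpd}$ is the category of groupoids and functors. For a groupoid $\mathcal H$, $\widetilde S(\mathcal H)$ has $ob=mor(\mathcal H)$, $\mathrm{Hom}(g,h)=\{(h,g)\}$ if $t(h)=t(g)$ and empty otherwise, composition $(k,h)\circ(h,g)=(k,g)$, partition $\{\{(k,l):k^{-1}l=f\}\}_{f}$, $T(f)=f$, $T((f,g))=(g,f)$, base points $\{1_x\}$; $\widetilde S(F)(f)=F(f)$, $\widetilde S(F)(f,g)=(F(f),F(g))$. For semi-thin $(\mathcal C,S,T)$, ${}_\alpha S_\beta=\{\sigma:p^\sigma_{\sigma\alpha}=p^\sigma_{\beta\sigma}=1\}$, and $\widetilde R(\mathcal C,S,T)$ is the groupoid with objects $S_0$, $\mathrm{Hom}(\alpha,\beta)={}_\alpha S_\beta$, $\tau\circ\sigma$ the unique $\mu$ with $p^\mu_{\tau\sigma}=1$. For a morphism $F$, $\widetilde R(F)$ sends $\alpha\in S_0$ (resp. $\sigma\in S$) to the unique block of the target containing $F(\alpha)$ (resp. $F(\sigma)$). *)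

theory Defs
  imports Main "HOL-Library.FuncSet" "HOL-Library.Equipollence"
begin

record ('o,'m) cat =
  Obj  :: "'o set"
  Mor  :: "'m set"
  Dom  :: "'m \<Rightarrow> 'o"
  Cod  :: "'m \<Rightarrow> 'o"
  Idm  :: "'o \<Rightarrow> 'm"
  Comp :: "'m \<Rightarrow> 'm \<Rightarrow> 'm"   \<comment> \<open>Comp C g f = g o f, meaningful when Cod f = Dom g\<close>

definition category :: "('o,'m) cat \<Rightarrow> bool" where
  "category C \<longleftrightarrow>
     (\<forall>f\<in>Mor C. Dom C f \<in> Obj C \<and> Cod C f \<in> Obj C) \<and>
     (\<forall>x\<in>Obj C. Idm C x \<in> Mor C \<and> Dom C (Idm C x) = x \<and> Cod C (Idm C x) = x) \<and>
     (\<forall>f\<in>Mor C. \<forall>g\<in>Mor C. Cod C f = Dom C g \<longrightarrow>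
         Comp C g f \<in> Mor C \<and> Dom C (Comp C g f) = Dom C f \<and> Cod C (Comp C g f) = Cod C g) \<and>
     (\<forall>f\<in>Mor C. Comp C f (Idm C (Dom C f)) = f \<and> Comp C (Idm C (Cod C f)) f = f) \<and>
     (\<forall>f\<in>Mor C. \<forall>g\<in>Mor C. \<forall>h\<in>Mor C. Cod C f = Dom C g \<longrightarrow> Cod C g = Dom C h \<longrightarrow>
         Comp C h (Comp C g f) = Comp C (Comp C h g) f)"

definition Hom :: "('o,'m) cat \<Rightarrow> 'o \<Rightarrow> 'o \<Rightarrow> 'm set" where
  "Hom C x y = {f \<in> Mor C. Dom C f = x \<and> Cod C f = y}"

definition is_inverse :: "('o,'m) cat \<Rightarrow> 'm \<Rightarrow> 'm \<Rightarrow> bool" where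
  "is_inverse C f g \<longleftrightarrow> g \<in> Mor C \<and> Dom C g = Cod C f \<and> Cod C g = Dom C f \<and>
     Comp C g f = Idm C (Dom C f) \<and> Comp C f g = Idm C (Cod C f)"

definition groupoid :: "('o,'m) cat \<Rightarrow> bool" where
  "groupoid C \<longleftrightarrow> category C \<and> (\<forall>f\<in>Mor C. \<exists>g. is_inverse C f g)"

definition ginv :: "('o,'m) cat \<Rightarrow> 'm \<Rightarrow> 'm" where
  "ginv C f = (THE g. is_inverse C f g)"

text \<open>A functor is a pair (object map, morphism map); both maps are taken extensional
  (undefined outside the carriers), so that equal functors are equal as HOL values.\<close>

definition is_functor :: "('o,'m) cat \<Rightarrow> ('p,'n) cat \<Rightarrow> ('o \<Rightarrow> 'p) \<times> ('m \<Rightarrow> 'n) \<Rightarrow> bool" where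
  "is_functor C D F \<longleftrightarrow> category C \<and> category D \<and>
     fst F \<in> extensional (Obj C) \<and> snd F \<in> extensional (Mor C) \<and>
     (\<forall>x\<in>Obj C. fst F x \<in> Obj D) \<and>
     (\<forall>f\<in>Mor C. snd F f \<in> Mor D \<and> Dom D (snd F f) = fst F (Dom C f) \<and>
                                   Cod D (snd F f) = fst F (Cod C f)) \<and>
     (\<forall>x\<in>Obj C. snd F (Idm C x) = Idm D (fst F x)) \<and>
     (\<forall>f\<in>Mor C. \<forall>g\<in>Mor C. Cod C f = Dom C g \<longrightarrow>
         snd F (Comp C g f) = Comp D (snd F g) (snd F f))"

definition fcomp :: "('o,'m) cat \<Rightarrow> ('p \<Rightarrow> 'q) \<times> ('n \<Rightarrow> 'r) \<Rightarrow> ('o \<Rightarrow> 'p) \<times> ('m \<Rightarrow> 'n)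
                     \<Rightarrow> ('o \<Rightarrow> 'q) \<times> ('m \<Rightarrow> 'r)" where
  "fcomp C G F = (restrict (fst G \<circ> fst F) (Obj C), restrict (snd G \<circ> snd F) (Mor C))"

definition fid :: "('o,'m) cat \<Rightarrow> ('o \<Rightarrow> 'o) \<times> ('m \<Rightarrow> 'm)" where
  "fid C = (restrict id (Obj C), restrict id (Mor C))"

definition gpd_hom :: "('o,'m) cat \<Rightarrow> ('p,'n) cat \<Rightarrow> (('o \<Rightarrow> 'p) \<times> ('m \<Rightarrow> 'n)) set" where
  "gpd_hom H K = {F. is_functor H K F}"

record ('o,'m) schemoid =
  Cat    :: "('o,'m) cat"
  Blocks :: "'m set set"
  Tob    :: "'o \<Rightarrow> 'o"
  Tmor   :: "'m \<Rightarrow> 'm"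
  Base   :: "'o set"

definition partition_of :: "'m set \<Rightarrow> 'm set set \<Rightarrow> bool" where
  "partition_of A S \<longleftrightarrow> (\<forall>\<sigma>\<in>S. \<sigma> \<noteq> {} \<and> \<sigma> \<subseteq> A) \<and> (\<forall>f\<in>A. \<exists>!\<sigma>. \<sigma> \<in> S \<and> f \<in> \<sigma>)"

definition pset :: "('o,'m) cat \<Rightarrow> 'm set \<Rightarrow> 'm set \<Rightarrow> 'm \<Rightarrow> ('m \<times> 'm) set" where
  "pset C \<sigma> \<tau> f = {(a,b). a \<in> \<sigma> \<and> b \<in> \<tau> \<and> Dom C a = Cod C b \<and> Comp C a b = f}"

definition quasi_schemoid :: "('o,'m) cat \<Rightarrow> 'm set set \<Rightarrow> bool" where
  "quasi_schemoid C S \<longleftrightarrow> category C \<and> partition_of (Mor C) S \<and>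
     (\<forall>\<sigma>\<in>S. \<forall>\<tau>\<in>S. \<forall>\<mu>\<in>S. \<forall>f\<in>\<mu>. \<forall>g\<in>\<mu>. pset C \<sigma> \<tau> f \<approx> pset C \<sigma> \<tau> g)"

text \<open>Structure constant p^mu_{sigma tau} (used only through the condition "= 1").\<close>
definition pnum :: "('o,'m) cat \<Rightarrow> 'm set \<Rightarrow> 'm set \<Rightarrow> 'm set \<Rightarrow> nat" where
  "pnum C \<sigma> \<tau> \<mu> = card (pset C \<sigma> \<tau> (SOME f. f \<in> \<mu>))"

definition contra_endofunctor :: "('o,'m) cat \<Rightarrow> ('o \<Rightarrow> 'o) \<Rightarrow> ('m \<Rightarrow> 'm) \<Rightarrow> bool" where
  "contra_endofunctor C To Tm \<longleftrightarrow>
     (\<forall>x\<in>Obj C. To x \<in> Obj C) \<and>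
     (\<forall>f\<in>Mor C. Tm f \<in> Mor C \<and> Dom C (Tm f) = To (Cod C f) \<and> Cod C (Tm f) = To (Dom C f)) \<and>
     (\<forall>x\<in>Obj C. Tm (Idm C x) = Idm C (To x)) \<and>
     (\<forall>f\<in>Mor C. \<forall>g\<in>Mor C. Cod C f = Dom C g \<longrightarrow> Tm (Comp C g f) = Comp C (Tm f) (Tm g))"

definition assoc_schemoid :: "('o,'m) schemoid \<Rightarrow> bool" where
  "assoc_schemoid X \<longleftrightarrow> quasi_schemoid (Cat X) (Blocks X) \<and>
     (\<forall>\<sigma>\<in>Blocks X. (\<exists>f\<in>\<sigma>. Dom (Cat X) f = Cod (Cat X) f) \<longrightarrow>
                       (\<forall>f\<in>\<sigma>. Dom (Cat X) f = Cod (Cat X) f)) \<and>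
     contra_endofunctor (Cat X) (Tob X) (Tmor X) \<and>
     (\<forall>x\<in>Obj (Cat X). Tob X (Tob X x) = x) \<and> (\<forall>f\<in>Mor (Cat X). Tmor X (Tmor X f) = f) \<and>
     (\<forall>\<sigma>\<in>Blocks X. Tmor X ` \<sigma> \<in> Blocks X)"

definition J0 :: "('o,'m) schemoid \<Rightarrow> 'm set" where
  "J0 X = Idm (Cat X) ` Obj (Cat X)"

definition unital :: "('o,'m) schemoid \<Rightarrow> bool" where
  "unital X \<longleftrightarrow> assoc_schemoid X \<and> (\<forall>\<sigma>\<in>Blocks X. \<sigma> \<inter> J0 X \<noteq> {} \<longrightarrow> \<sigma> \<subseteq> J0 X)"

definition semi_thin :: "('o,'m) schemoid \<Rightarrow> bool" where
  "semi_thin X \<longleftrightarrow> unital X \<and>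
     (\<forall>\<sigma>\<in>Blocks X. \<forall>f\<in>\<sigma>. \<forall>g\<in>\<sigma>. Dom (Cat X) f = Dom (Cat X) g \<longrightarrow> f = g) \<and>
     groupoid (Cat X) \<and> (\<forall>f\<in>Mor (Cat X). Tmor X f = ginv (Cat X) f)"

definition S0 :: "('o,'m) schemoid \<Rightarrow> 'm set set" where
  "S0 X = {\<alpha> \<in> Blocks X. \<alpha> \<inter> J0 X \<noteq> {}}"

definition block_of :: "'m set set \<Rightarrow> 'm \<Rightarrow> 'm set" where
  "block_of S f = (THE \<sigma>. \<sigma> \<in> S \<and> f \<in> \<sigma>)"

definition conn :: "('o,'m) cat \<Rightarrow> ('o \<times> 'o) set" where
  "conn C = (\<Union>f\<in>Mor C. {(Dom C f, Cod C f), (Cod C f, Dom C f)})\<^sup>*"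

definition thin_smd :: "('o,'m) schemoid \<Rightarrow> bool" where
  "thin_smd X \<longleftrightarrow> semi_thin X \<and>
     (\<forall>x\<in>Obj (Cat X). \<forall>y\<in>Obj (Cat X). \<forall>f\<in>Hom (Cat X) x y. \<forall>g\<in>Hom (Cat X) x y. f = g) \<and>
     Base X \<subseteq> Obj (Cat X) \<and>
     (\<forall>x\<in>Obj (Cat X). \<exists>!v. v \<in> Base X \<and> (x, v) \<in> conn (Cat X)) \<and>
     bij_betw (\<lambda>v. block_of (Blocks X) (Idm (Cat X) v)) (Base X) (S0 X)"

definition smd_morph :: "('o,'m) schemoid \<Rightarrow> ('p,'n) schemoid \<Rightarrow> ('o \<Rightarrow> 'p) \<times> ('m \<Rightarrow> 'n) \<Rightarrow> bool" where
  "smd_morph X Y F \<longleftrightarrow> is_functor (Cat X) (Cat Y) F \<and>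
     (\<forall>\<sigma>\<in>Blocks X. \<exists>\<tau>\<in>Blocks Y. snd F ` \<sigma> \<subseteq> \<tau>) \<and>
     (\<forall>x\<in>Obj (Cat X). fst F (Tob X x) = Tob Y (fst F x)) \<and>
     (\<forall>f\<in>Mor (Cat X). snd F (Tmor X f) = Tmor Y (snd F f)) \<and>
     fst F ` Base X \<subseteq> Base Y"

definition smd_hom :: "('o,'m) schemoid \<Rightarrow> ('p,'n) schemoid \<Rightarrow> (('o \<Rightarrow> 'p) \<times> ('m \<Rightarrow> 'n)) set" where
  "smd_hom X Y = {F. smd_morph X Y F}"

definition smd_iso :: "('o,'m) schemoid \<Rightarrow> ('p,'n) schemoid \<Rightarrow> bool" where
  "smd_iso X Y \<longleftrightarrow> (\<exists>F G. F \<in> smd_hom X Y \<and> G \<in> smd_hom Y X \<and>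
      fcomp (Cat X) G F = fid (Cat X) \<and> fcomp (Cat Y) F G = fid (Cat Y))"

definition Stil_cat :: "('o,'m) cat \<Rightarrow> ('m, 'm \<times> 'm) cat" where
  "Stil_cat H = \<lparr> Obj = Mor H,
       Mor = {(h, g). h \<in> Mor H \<and> g \<in> Mor H \<and> Cod H h = Cod H g},
       Dom = snd, Cod = fst, Idm = (\<lambda>g. (g, g)),
       Comp = (\<lambda>p q. (fst p, snd q)) \<rparr>"

definition Stil :: "('o,'m) cat \<Rightarrow> ('m, 'm \<times> 'm) schemoid" where
  "Stil H = \<lparr> Cat = Stil_cat H,
       Blocks = {{(k, l). k \<in> Mor H \<and> l \<in> Mor H \<and> Cod H k = Cod H l \<and> Comp H (ginv H k) l = f}
                 | f. f \<in> Mor H},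
       Tob = (\<lambda>f. f), Tmor = (\<lambda>(f, g). (g, f)),
       Base = Idm H ` Obj H \<rparr>"

definition Stil_fun :: "('o,'m) cat \<Rightarrow> ('o \<Rightarrow> 'p) \<times> ('m \<Rightarrow> 'n)
                        \<Rightarrow> ('m \<Rightarrow> 'n) \<times> ('m \<times> 'm \<Rightarrow> 'n \<times> 'n)" where
  "Stil_fun H F = (restrict (snd F) (Mor H),
                   restrict (\<lambda>(f, g). (snd F f, snd F g)) (Mor (Stil_cat H)))"

text \<open>A morphism sigma : alpha -> beta of R~(X) is encoded as the triple (alpha, sigma, beta)
  (hom-sets of a category being taken disjoint).\<close>
definition Rtil :: "('o,'m) schemoid \<Rightarrow> ('m set, 'm set \<times> 'm set \<times> 'm set) cat" where
  "Rtil X = \<lparr> Obj = S0 X,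
       Mor = {(\<alpha>, \<sigma>, \<beta>). \<alpha> \<in> S0 X \<and> \<beta> \<in> S0 X \<and> \<sigma> \<in> Blocks X \<and>
                         pnum (Cat X) \<sigma> \<alpha> \<sigma> = 1 \<and> pnum (Cat X) \<beta> \<sigma> \<sigma> = 1},
       Dom = fst, Cod = (\<lambda>t. snd (snd t)), Idm = (\<lambda>\<alpha>. (\<alpha>, \<alpha>, \<alpha>)),
       Comp = (\<lambda>p q. (fst q,
                        THE \<mu>. \<mu> \<in> Blocks X \<and> pnum (Cat X) (fst (snd p)) (fst (snd q)) \<mu> = 1,
                        snd (snd p))) \<rparr>"

definition Rtil_fun :: "('o,'m) schemoid \<Rightarrow> ('p,'n) schemoid \<Rightarrow> ('o \<Rightarrow> 'p) \<times> ('m \<Rightarrow> 'n)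
     \<Rightarrow> ('m set \<Rightarrow> 'n set) \<times> ('m set \<times> 'm set \<times> 'm set \<Rightarrow> 'n set \<times> 'n set \<times> 'n set)" where
  "Rtil_fun X Y F =
     (let Bl = (\<lambda>\<sigma>. THE \<tau>. \<tau> \<in> Blocks Y \<and> snd F ` \<sigma> \<subseteq> \<tau>) in
      (restrict Bl (S0 X),
       restrict (\<lambda>(\<alpha>, \<sigma>, \<beta>). (Bl \<alpha>, Bl \<sigma>, Bl \<beta>)) (Mor (Rtil X))))"

end

(*
  S~(H) has the arrows of H as objects and exactly one arrow (k, l) from l to k whenever k and
  l have the same target; this arrow lies in the block indexed by k^-1 l. Its structure
  constants are 0 or 1, so it is a thin schemoid whose blocks of identities correspond to the
  objects of H. A morphism S~(H) -> S~(K) is determined by its action on the arrows of H, and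
  preservation of blocks forces that action to be a functor: S~ is fully faithful.

  Conversely, in a thin schemoid X every block has a source and a target block of identities,
  and the block of a composite depends only on the blocks of the factors, so the blocks form a
  groupoid R~(X) over the blocks of identities. A morphism k : S~(H) -> X corresponds to the
  functor sending f : x -> y to the block of k(1_y, f); from a functor P : H -> R~(X) one
  recovers k by lifting each block P f to its unique member ending at the base point of P y.
  Finally X is isomorphic to S~ of R~(X) transported to the base points, an object x of X
  standing for the block of the unique arrow from x to its base point.
*)
theory Submission
  imports Defs
begin

section \<open>Categories and groupoids\<close>

lemma cat_dom[simp, intro]: "category C \<Longrightarrow> f \<in> Mor C \<Longrightarrow> Dom C f \<in> Obj C"
  and cat_cod[simp, intro]: "category C \<Longrightarrow> f \<in> Mor C \<Longrightarrow> Cod C f \<in> Obj C"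
  and cat_idm[simp, intro]: "category C \<Longrightarrow> x \<in> Obj C \<Longrightarrow> Idm C x \<in> Mor C"
  and cat_idm_dom[simp]: "category C \<Longrightarrow> x \<in> Obj C \<Longrightarrow> Dom C (Idm C x) = x"
  and cat_idm_cod[simp]: "category C \<Longrightarrow> x \<in> Obj C \<Longrightarrow> Cod C (Idm C x) = x"
  and cat_comp[simp]: "category C \<Longrightarrow> f \<in> Mor C \<Longrightarrow> g \<in> Mor C \<Longrightarrow> Cod C f = Dom C g \<Longrightarrow> Comp C g f \<in> Mor C"
  and cat_comp_dom[simp]: "category C \<Longrightarrow> f \<in> Mor C \<Longrightarrow> g \<in> Mor C \<Longrightarrow> Cod C f = Dom C g \<Longrightarrow>
      Dom C (Comp C g f) = Dom C f"
  and cat_comp_cod[simp]: "category C \<Longrightarrow> f \<in> Mor C \<Longrightarrow> g \<in> Mor C \<Longrightarrow> Cod C f = Dom C g \<Longrightarrow>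
      Cod C (Comp C g f) = Cod C g"
  and cat_idr[simp]: "category C \<Longrightarrow> f \<in> Mor C \<Longrightarrow> Dom C f = x \<Longrightarrow> Comp C f (Idm C x) = f"
  and cat_idl[simp]: "category C \<Longrightarrow> f \<in> Mor C \<Longrightarrow> Cod C f = y \<Longrightarrow> Comp C (Idm C y) f = f"
  and cat_assoc: "category C \<Longrightarrow> f \<in> Mor C \<Longrightarrow> g \<in> Mor C \<Longrightarrow> h \<in> Mor C \<Longrightarrow>
      Cod C f = Dom C g \<Longrightarrow> Cod C g = Dom C h \<Longrightarrow> Comp C h (Comp C g f) = Comp C (Comp C h g) f"
  unfolding category_def by blast+

lemma inverse_unique:
  assumes "category C" "f \<in> Mor C" "is_inverse C f g" "is_inverse C f g'"
  shows "g = g'"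
proof -
  have g: "g \<in> Mor C" "Dom C g = Cod C f" "Comp C g f = Idm C (Dom C f)"
    and g': "g' \<in> Mor C" "Cod C g' = Dom C f" "Comp C f g' = Idm C (Cod C f)"
    using assms(3,4) unfolding is_inverse_def by auto
  have "g = Comp C g (Comp C f g')" using assms g g' by simp
  also have "\<dots> = Comp C (Comp C g f) g'" using assms g g' cat_assoc[of C g' f g] by simp
  also have "\<dots> = g'" using assms g g' by simp
  finally show ?thesis .
qed

lemma gpd_cat[simp, intro]: "groupoid C \<Longrightarrow> category C"
  unfolding groupoid_def by blast

lemma ginv_inverse: "groupoid C \<Longrightarrow> f \<in> Mor C \<Longrightarrow> is_inverse C f (ginv C f)"
  unfolding ginv_def groupoid_def by (metis (no_types, lifting) inverse_unique the_equality)

lemma ginv_eq: "groupoid C \<Longrightarrow> f \<in> Mor C \<Longrightarrow> is_inverse C f g \<Longrightarrow> ginv C f = g"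
  using ginv_inverse inverse_unique gpd_cat by metis

lemma ginv_mor[simp, intro]: "groupoid C \<Longrightarrow> f \<in> Mor C \<Longrightarrow> ginv C f \<in> Mor C"
  and ginv_dom[simp]: "groupoid C \<Longrightarrow> f \<in> Mor C \<Longrightarrow> Dom C (ginv C f) = Cod C f"
  and ginv_cod[simp]: "groupoid C \<Longrightarrow> f \<in> Mor C \<Longrightarrow> Cod C (ginv C f) = Dom C f"
  and ginv_left[simp]: "groupoid C \<Longrightarrow> f \<in> Mor C \<Longrightarrow> Comp C (ginv C f) f = Idm C (Dom C f)"
  and ginv_right[simp]: "groupoid C \<Longrightarrow> f \<in> Mor C \<Longrightarrow> Comp C f (ginv C f) = Idm C (Cod C f)"
  using ginv_inverse[of C f] unfolding is_inverse_def by auto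

lemma ginv_ginv[simp]: "groupoid C \<Longrightarrow> f \<in> Mor C \<Longrightarrow> ginv C (ginv C f) = f"
  by (rule ginv_eq) (auto simp: is_inverse_def)

lemma ginv_idm[simp]: "groupoid C \<Longrightarrow> x \<in> Obj C \<Longrightarrow> ginv C (Idm C x) = Idm C x"
  by (rule ginv_eq) (auto simp: is_inverse_def)

lemma gpd_cancel_left:
  assumes G: "groupoid C" and m: "g \<in> Mor C" "f \<in> Mor C" "f' \<in> Mor C"
    and c: "Cod C f = Dom C g" "Cod C f' = Dom C g" and eq: "Comp C g f = Comp C g f'"
  shows "f = f'"
proof -
  have "f = Comp C (ginv C g) (Comp C g f)" using G m c cat_assoc[of C f g "ginv C g"] by simp
  also have "\<dots> = Comp C (ginv C g) (Comp C g f')" by (simp only: eq)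
  also have "\<dots> = f'" using G m c cat_assoc[of C f' g "ginv C g"] by simp
  finally show ?thesis .
qed

lemma gpd_cancel_right:
  assumes G: "groupoid C" and m: "g \<in> Mor C" "f \<in> Mor C" "f' \<in> Mor C"
    and c: "Cod C g = Dom C f" "Cod C g = Dom C f'" and eq: "Comp C f g = Comp C f' g"
  shows "f = f'"
proof -
  have "f = Comp C (Comp C f g) (ginv C g)" using G m c cat_assoc[of C "ginv C g" g f] by simp
  also have "\<dots> = Comp C (Comp C f' g) (ginv C g)" by (simp only: eq)
  also have "\<dots> = f'" using G m c cat_assoc[of C "ginv C g" g f'] by simp
  finally show ?thesis .
qed

lemma gpd_comp_eq_iff:
  assumes G: "groupoid C" and "k \<in> Mor C" "l \<in> Mor C" "c \<in> Mor C"
    and "Cod C k = Cod C l" "Cod C c = Dom C k"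
  shows "Comp C (ginv C k) l = c \<longleftrightarrow> l = Comp C k c"
proof -
  have "Comp C k (Comp C (ginv C k) l) = l"
    using assms cat_assoc[of C l "ginv C k" k] by auto
  moreover have "Comp C (ginv C k) (Comp C k c) = c"
    using assms cat_assoc[of C c k "ginv C k"] by auto
  ultimately show ?thesis by metis
qed

lemma ginv_comp:
  assumes G: "groupoid C" and f: "f \<in> Mor C" and g: "g \<in> Mor C" and fg: "Cod C f = Dom C g"
  shows "ginv C (Comp C g f) = Comp C (ginv C f) (ginv C g)"
proof (rule ginv_eq)
  have c: "category C" using G by blast
  have "Comp C (Comp C (ginv C f) (ginv C g)) (Comp C g f)
      = Comp C (ginv C f) (Comp C (Comp C (ginv C g) g) f)"
    using assms cat_assoc[of C "Comp C g f" "ginv C g" "ginv C f"] cat_assoc[of C f g "ginv C g"]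
    by (auto simp: cat_comp)
  also have "\<dots> = Idm C (Dom C f)" using assms by simp
  finally have l: "Comp C (Comp C (ginv C f) (ginv C g)) (Comp C g f) = Idm C (Dom C f)" .
  have "Comp C (Comp C g f) (Comp C (ginv C f) (ginv C g))
      = Comp C g (Comp C (Comp C f (ginv C f)) (ginv C g))"
    using assms cat_assoc[of C "Comp C (ginv C f) (ginv C g)" f g]
      cat_assoc[of C "ginv C g" "ginv C f" f]
    by (auto simp: cat_comp)
  also have "\<dots> = Idm C (Cod C g)" using assms by simp
  finally have r: "Comp C (Comp C g f) (Comp C (ginv C f) (ginv C g)) = Idm C (Cod C g)" .
  show "is_inverse C (Comp C g f) (Comp C (ginv C f) (ginv C g))"
    unfolding is_inverse_def using assms l r by (auto simp: cat_comp)
qed (use assms in \<open>auto simp: cat_comp\<close>)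

lemma is_functorD:
  assumes "is_functor C D F"
  shows "category C" "category D" "fst F \<in> extensional (Obj C)" "snd F \<in> extensional (Mor C)"
    "\<And>x. x \<in> Obj C \<Longrightarrow> fst F x \<in> Obj D"
    "\<And>f. f \<in> Mor C \<Longrightarrow> snd F f \<in> Mor D"
    "\<And>f. f \<in> Mor C \<Longrightarrow> Dom D (snd F f) = fst F (Dom C f)"
    "\<And>f. f \<in> Mor C \<Longrightarrow> Cod D (snd F f) = fst F (Cod C f)"
    "\<And>x. x \<in> Obj C \<Longrightarrow> snd F (Idm C x) = Idm D (fst F x)"
    "\<And>f g. f \<in> Mor C \<Longrightarrow> g \<in> Mor C \<Longrightarrow> Cod C f = Dom C g \<Longrightarrow>
       snd F (Comp C g f) = Comp D (snd F g) (snd F f)"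
  using assms unfolding is_functor_def by blast+

lemma functor_eqI:
  assumes "is_functor C D F" "is_functor C D F'"
    and "\<And>x. x \<in> Obj C \<Longrightarrow> fst F x = fst F' x" "\<And>f. f \<in> Mor C \<Longrightarrow> snd F f = snd F' f"
  shows "F = F'"
proof -
  have "fst F = fst F'"
    by (rule extensionalityI[of _ "Obj C"]) (use assms in \<open>auto dest: is_functorD\<close>)
  moreover have "snd F = snd F'"
    by (rule extensionalityI[of _ "Mor C"]) (use assms in \<open>auto dest: is_functorD\<close>)
  ultimately show ?thesis by (simp add: prod_eq_iff)
qed

lemma block_of_eq: "partition_of A S \<Longrightarrow> \<sigma> \<in> S \<Longrightarrow> f \<in> \<sigma> \<Longrightarrow> block_of S f = \<sigma>"
  unfolding partition_of_def block_of_def by (rule the_equality) blast+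

lemma block_of_in: "partition_of A S \<Longrightarrow> f \<in> A \<Longrightarrow> block_of S f \<in> S \<and> f \<in> block_of S f"
  unfolding partition_of_def block_of_def by (metis (no_types, lifting) theI')

lemma eqpoll_nonempty: "A \<approx> B \<Longrightarrow> A \<noteq> {} \<Longrightarrow> B \<noteq> {}"
  using eqpoll_empty_iff_empty eqpoll_sym eqpoll_trans by metis

lemma card_eq_1_if_eqpoll_singleton: "A \<approx> {x} \<Longrightarrow> card A = 1"
  by (metis eqpoll_finite_iff eqpoll_iff_card finite.emptyI finite_insert is_singletonI
      is_singleton_altdef)

locale cat_transport =
  fixes H :: "('a,'b) cat" and R :: "('c,'d) cat" and ob_map :: "'a \<Rightarrow> 'c" and mor_map :: "'b \<Rightarrow> 'd"
  assumes R: "groupoid R"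
    and ob_bij: "bij_betw ob_map (Obj H) (Obj R)" and mor_bij: "bij_betw mor_map (Mor H) (Mor R)"
    and dom: "\<And>f. f \<in> Mor H \<Longrightarrow> Dom H f \<in> Obj H \<and> ob_map (Dom H f) = Dom R (mor_map f)"
    and cod: "\<And>f. f \<in> Mor H \<Longrightarrow> Cod H f \<in> Obj H \<and> ob_map (Cod H f) = Cod R (mor_map f)"
    and idm: "\<And>v. v \<in> Obj H \<Longrightarrow> Idm H v \<in> Mor H \<and> mor_map (Idm H v) = Idm R (ob_map v)"
    and comp: "\<And>f g. f \<in> Mor H \<Longrightarrow> g \<in> Mor H \<Longrightarrow> Cod H f = Dom H g \<Longrightarrow>
        Comp H g f \<in> Mor H \<and> mor_map (Comp H g f) = Comp R (mor_map g) (mor_map f)"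
begin

lemma cat_R: "category R" using R by blast

lemma ob_map_eqD: "x \<in> Obj H \<Longrightarrow> y \<in> Obj H \<Longrightarrow> ob_map x = ob_map y \<Longrightarrow> x = y"
  using ob_bij unfolding bij_betw_def inj_on_def by blast

lemma mor_map_eqD: "f \<in> Mor H \<Longrightarrow> g \<in> Mor H \<Longrightarrow> mor_map f = mor_map g \<Longrightarrow> f = g"
  using mor_bij unfolding bij_betw_def inj_on_def by blast

lemma ob_map_obj: "x \<in> Obj H \<Longrightarrow> ob_map x \<in> Obj R" using ob_bij unfolding bij_betw_def by blast

lemma mor_map_mor: "f \<in> Mor H \<Longrightarrow> mor_map f \<in> Mor R" using mor_bij unfolding bij_betw_def by blast

lemma mor_map_composable:
  "f \<in> Mor H \<Longrightarrow> g \<in> Mor H \<Longrightarrow> Cod H f = Dom H g \<Longrightarrow> Cod R (mor_map f) = Dom R (mor_map g)"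
  using dom cod by metis

lemma idm_dom_cod: "v \<in> Obj H \<Longrightarrow> Dom H (Idm H v) = v \<and> Cod H (Idm H v) = v"
  using idm dom cod cat_R ob_map_obj ob_map_eqD by (metis cat_idm_cod cat_idm_dom)

lemma comp_dom_cod:
  assumes f: "f \<in> Mor H" and g: "g \<in> Mor H" and fg: "Cod H f = Dom H g"
  shows "Dom H (Comp H g f) = Dom H f \<and> Cod H (Comp H g f) = Cod H g"
proof -
  have gf: "Comp H g f \<in> Mor H" "mor_map (Comp H g f) = Comp R (mor_map g) (mor_map f)"
    using comp[OF f g fg]
    by auto
  have "ob_map (Dom H (Comp H g f)) = ob_map (Dom H f)"
    "ob_map (Cod H (Comp H g f)) = ob_map (Cod H g)"
    using dom[OF gf(1)] cod[OF gf(1)] gf(2) dom[OF f] cod[OF g] cat_R mor_map_mor f g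
      mor_map_composable[OF f g fg]
    by simp_all
  then show ?thesis using ob_map_eqD dom cod gf(1) f g by blast
qed

lemma category: "category H"
  unfolding category_def
proof (intro conjI ballI impI)
  fix f assume f: "f \<in> Mor H"
  show "Dom H f \<in> Obj H" "Cod H f \<in> Obj H" using dom[OF f] cod[OF f] by simp_all
  have "mor_map (Comp H f (Idm H (Dom H f))) = mor_map f"
    "mor_map (Comp H (Idm H (Cod H f)) f) = mor_map f"
    using comp[of "Idm H (Dom H f)" f] comp[of f "Idm H (Cod H f)"] idm dom[OF f] cod[OF f]
      idm_dom_cod f cat_R mor_map_mor by simp_all
  then show "Comp H f (Idm H (Dom H f)) = f" "Comp H (Idm H (Cod H f)) f = f"
    using mor_map_eqD comp idm idm_dom_cod dom[OF f] cod[OF f] f by metis+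
next
  fix x assume "x \<in> Obj H"
  then show "Idm H x \<in> Mor H" "Dom H (Idm H x) = x" "Cod H (Idm H x) = x" using idm idm_dom_cod
    by simp_all
next
  fix f g assume "f \<in> Mor H" "g \<in> Mor H" "Cod H f = Dom H g"
  then show "Comp H g f \<in> Mor H" "Dom H (Comp H g f) = Dom H f" "Cod H (Comp H g f) = Cod H g"
    using comp comp_dom_cod by simp_all
next
  fix f g h assume f: "f \<in> Mor H" and g: "g \<in> Mor H" and h: "h \<in> Mor H"
    and fg: "Cod H f = Dom H g" and gh: "Cod H g = Dom H h"
  have "Cod H (Comp H g f) = Dom H h" "Cod H f = Dom H (Comp H h g)"
    using comp_dom_cod f g h fg gh by simp_all
  then have "mor_map (Comp H h (Comp H g f)) = Comp R (mor_map h) (Comp R (mor_map g) (mor_map f))"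
    "mor_map (Comp H (Comp H h g) f) = Comp R (Comp R (mor_map h) (mor_map g)) (mor_map f)"
    "Comp H h (Comp H g f) \<in> Mor H" "Comp H (Comp H h g) f \<in> Mor H"
    using comp f g h fg gh by simp_all
  moreover have
    "Comp R (mor_map h) (Comp R (mor_map g) (mor_map f))
      = Comp R (Comp R (mor_map h) (mor_map g)) (mor_map f)"
    using cat_assoc[OF cat_R mor_map_mor mor_map_mor mor_map_mor mor_map_composable
        mor_map_composable] f g h fg gh
    by simp
  ultimately show "Comp H h (Comp H g f) = Comp H (Comp H h g) f" using mor_map_eqD by metis
qed

lemma inverse:
  assumes f: "f \<in> Mor H"
  obtains g where "g \<in> Mor H" "is_inverse H f g" "mor_map g = ginv R (mor_map f)"
proof -
  obtain g where g: "g \<in> Mor H" "mor_map g = ginv R (mor_map f)"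
    using mor_bij R mor_map_mor[OF f] unfolding bij_betw_def by (metis ginv_mor imageE)
  have dc: "Dom H g = Cod H f" "Cod H g = Dom H f"
    using ob_map_eqD dom cod g f R mor_map_mor[OF f] by (metis ginv_dom ginv_cod)+
  have "mor_map (Comp H g f) = mor_map (Idm H (Dom H f))"
    "mor_map (Comp H f g) = mor_map (Idm H (Cod H f))"
    using comp[OF f g(1)] comp[OF g(1) f] idm dom[OF f] cod[OF f] g(2) dc R mor_map_mor[OF f]
    by simp_all
  then have "Comp H g f = Idm H (Dom H f)" "Comp H f g = Idm H (Cod H f)"
    using mor_map_eqD comp[OF f g(1)] comp[OF g(1) f] idm dom[OF f] cod[OF f] dc by metis+
  then show ?thesis using that g dc unfolding is_inverse_def by simp
qed

lemma groupoid: "groupoid H"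
  unfolding groupoid_def using category inverse by metis

lemma mor_map_ginv: "f \<in> Mor H \<Longrightarrow> ginv H f \<in> Mor H \<and> mor_map (ginv H f) = ginv R (mor_map f)"
  using inverse ginv_eq[OF groupoid] by metis

end

section \<open>The thin schemoid of a groupoid\<close>

definition Stil_block :: "('o,'m) cat \<Rightarrow> 'm \<Rightarrow> ('m \<times> 'm) set" where
  "Stil_block H f = {(k, l). k \<in> Mor H \<and> l \<in> Mor H \<and> Cod H k = Cod H l \<and> Comp H (ginv H k) l = f}"

lemma Stil_cat_simps[simp]:
  "Obj (Stil_cat H) = Mor H"
  "Mor (Stil_cat H) = {(h, g). h \<in> Mor H \<and> g \<in> Mor H \<and> Cod H h = Cod H g}"
  "Dom (Stil_cat H) = snd" "Cod (Stil_cat H) = fst" "Idm (Stil_cat H) = (\<lambda>g. (g, g))"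
  "Comp (Stil_cat H) = (\<lambda>p q. (fst p, snd q))"
  by (simp_all add: Stil_cat_def)

lemma Stil_simps[simp]:
  "Cat (Stil H) = Stil_cat H" "Blocks (Stil H) = Stil_block H ` Mor H" "Tob (Stil H) = (\<lambda>f. f)"
  "Tmor (Stil H) = (\<lambda>(f, g). (g, f))" "Base (Stil H) = Idm H ` Obj H"
  by (auto simp: Stil_def Stil_block_def)

lemma Stil_block_iff:
  assumes G: "groupoid H" and f: "f \<in> Mor H"
  shows "(k, l) \<in> Stil_block H f \<longleftrightarrow> k \<in> Mor H \<and> Dom H k = Cod H f \<and> l = Comp H k f"
proof
  assume "(k, l) \<in> Stil_block H f"
  then have k: "k \<in> Mor H" "l \<in> Mor H" "Cod H k = Cod H l" "Comp H (ginv H k) l = f"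
    unfolding Stil_block_def by auto
  then have "Cod H f = Dom H k" using G by force
  then show "k \<in> Mor H \<and> Dom H k = Cod H f \<and> l = Comp H k f"
    using gpd_comp_eq_iff[OF G k(1,2) f k(3)] k by simp
next
  assume k: "k \<in> Mor H \<and> Dom H k = Cod H f \<and> l = Comp H k f"
  then have l: "l \<in> Mor H" "Cod H k = Cod H l" using G f by auto
  show "(k, l) \<in> Stil_block H f"
    using gpd_comp_eq_iff[OF G _ l(1) f l(2)] k l unfolding Stil_block_def by simp
qed

lemma Stil_block_subset: "Stil_block H f \<subseteq> Mor (Stil_cat H)"
  unfolding Stil_block_def by auto

lemma Stil_mor_in_block:
  "(h, g) \<in> Mor (Stil_cat H) \<Longrightarrow> (h, g) \<in> Stil_block H (Comp H (ginv H h) g)"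
  unfolding Stil_block_def by auto

lemma Stil_idm_in_block: "groupoid H \<Longrightarrow> f \<in> Mor H \<Longrightarrow> (Idm H (Cod H f), f) \<in> Stil_block H f"
  by (subst Stil_block_iff) auto

lemma Stil_partition:
  assumes G: "groupoid H"
  shows "partition_of (Mor (Stil_cat H)) (Stil_block H ` Mor H)"
proof -
  have "\<forall>\<sigma>\<in>Stil_block H ` Mor H. \<sigma> \<noteq> {} \<and> \<sigma> \<subseteq> Mor (Stil_cat H)"
    using Stil_idm_in_block[OF G] Stil_block_subset[of H] by fastforce
  moreover have "\<forall>p\<in>Mor (Stil_cat H). \<exists>!\<sigma>. \<sigma> \<in> Stil_block H ` Mor H \<and> p \<in> \<sigma>"
  proof (rule ballI)
    fix p assume p: "p \<in> Mor (Stil_cat H)"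
    obtain h g where hg: "p = (h, g)" by fastforce
    show "\<exists>!\<sigma>. \<sigma> \<in> Stil_block H ` Mor H \<and> p \<in> \<sigma>"
    proof (rule ex1I)
      show "Stil_block H (Comp H (ginv H h) g) \<in> Stil_block H ` Mor H \<and>
          p \<in> Stil_block H (Comp H (ginv H h) g)"
        using p hg G Stil_mor_in_block[of h g H] by auto
      show "\<sigma> = Stil_block H (Comp H (ginv H h) g)" if "\<sigma> \<in> Stil_block H ` Mor H \<and> p \<in> \<sigma>" for \<sigma>
        using that hg unfolding Stil_block_def by auto
    qed
  qed
  ultimately show ?thesis unfolding partition_of_def by (rule conjI)
qed

lemma Stil_block_of:
  "groupoid H \<Longrightarrow> (h, g) \<in> Mor (Stil_cat H) \<Longrightarrow>
    block_of (Stil_block H ` Mor H) (h, g) = Stil_block H (Comp H (ginv H h) g)"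
  by (rule block_of_eq[OF Stil_partition]) (auto intro: Stil_mor_in_block)

lemma Stil_category: "category (Stil_cat H)"
  unfolding category_def by simp

lemma Stil_inverse: "p \<in> Mor (Stil_cat H) \<Longrightarrow> is_inverse (Stil_cat H) p (snd p, fst p)"
  unfolding is_inverse_def by auto

lemma Stil_groupoid: "groupoid (Stil_cat H)"
  unfolding groupoid_def using Stil_category Stil_inverse by metis

lemma Stil_ginv: "p \<in> Mor (Stil_cat H) \<Longrightarrow> ginv (Stil_cat H) p = (snd p, fst p)"
  by (rule ginv_eq[OF Stil_groupoid _ Stil_inverse])

text \<open>Every structure constant of \<open>S~(H)\<close> is 0 or 1: a factorisation of \<open>(k, k c)\<close> through
  the blocks of \<open>a\<close> and \<open>b\<close> exists exactly when \<open>c = a b\<close>, and it is then unique.\<close>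

lemma pset_Stil_block:
  assumes G: "groupoid H" and a: "a \<in> Mor H" and b: "b \<in> Mor H" and c: "c \<in> Mor H"
    and kl: "(k, l) \<in> Stil_block H c"
  shows "pset (Stil_cat H) (Stil_block H a) (Stil_block H b) (k, l) =
     (if Dom H a = Cod H b \<and> Comp H a b = c then {((k, Comp H k a), (Comp H k a, l))} else {})"
proof -
  have k: "k \<in> Mor H" "Dom H k = Cod H c" "l = Comp H k c" using kl Stil_block_iff[OF G c] by auto
  let ?factors = "Dom H k = Cod H a \<and> Dom H a = Cod H b \<and> Comp H (Comp H k a) b = l"
  have "pset (Stil_cat H) (Stil_block H a) (Stil_block H b) (k, l) =
      (if ?factors then {((k, Comp H k a), (Comp H k a, l))} else {})"
    unfolding pset_def using Stil_block_iff[OF G a] Stil_block_iff[OF G b] G k(1) a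
    by (auto simp: cat_comp)
  moreover have "?factors \<longleftrightarrow> Dom H a = Cod H b \<and> Comp H a b = c"
  proof
    assume f: ?factors
    then have "Comp H k (Comp H a b) = Comp H k c" using k a b G cat_assoc[of H b a k] by simp
    then show "Dom H a = Cod H b \<and> Comp H a b = c"
      using f gpd_cancel_left[OF G k(1) _ c, of "Comp H a b"] k a b G by simp
  next
    assume "Dom H a = Cod H b \<and> Comp H a b = c"
    then show ?factors using k a b G cat_assoc[of H b a k] by auto
  qed
  ultimately show ?thesis by simp
qed

lemma Stil_block_idm_iff:
  assumes G: "groupoid H" and x: "x \<in> Obj H"
  shows "(k, l) \<in> Stil_block H (Idm H x) \<longleftrightarrow> k \<in> Mor H \<and> Dom H k = x \<and> l = k"
  using Stil_block_iff[OF G cat_idm[OF gpd_cat[OF G] x]] G x by auto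

lemma Stil_block_diag:
  assumes "groupoid H" "(g, g) \<in> Stil_block H f"
  shows "Dom H g \<in> Obj H" "f = Idm H (Dom H g)"
  using assms unfolding Stil_block_def by auto

lemma Stil_block_diag_subset:
  assumes G: "groupoid H" and g: "(g, g) \<in> Stil_block H f"
  shows "Stil_block H f \<subseteq> (\<lambda>h. (h, h)) ` Mor H"
  using Stil_block_diag[OF G g] Stil_block_idm_iff[OF G] by auto

lemma Stil_block_swap:
  assumes G: "groupoid H" and c: "c \<in> Mor H"
  shows "(\<lambda>(f, g). (g, f)) ` Stil_block H c = Stil_block H (ginv H c)"
proof -
  have swap: "(l, k) \<in> Stil_block H (ginv H c')" if "(k, l) \<in> Stil_block H c'" for k l c'
  proof -
    have k: "k \<in> Mor H" "l \<in> Mor H" "Cod H k = Cod H l" "Comp H (ginv H k) l = c'"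
      using that unfolding Stil_block_def by auto
    have "ginv H c' = Comp H (ginv H l) (ginv H (ginv H k))"
      using ginv_comp[OF G k(2) ginv_mor[OF G k(1)]] k G by simp
    then have "ginv H c' = Comp H (ginv H l) k" using G k(1) by simp
    then show ?thesis using k unfolding Stil_block_def by simp
  qed
  show ?thesis
  proof
    show "(\<lambda>(f, g). (g, f)) ` Stil_block H c \<subseteq> Stil_block H (ginv H c)" using swap by auto
    show "Stil_block H (ginv H c) \<subseteq> (\<lambda>(f, g). (g, f)) ` Stil_block H c"
      using swap[of _ _ "ginv H c"] G c by (auto simp: image_iff)
  qed
qed

lemma Stil_quasi_schemoid:
  assumes G: "groupoid H"
  shows "quasi_schemoid (Stil_cat H) (Stil_block H ` Mor H)"
proof -
  have "pset (Stil_cat H) \<sigma> \<tau> p \<approx> pset (Stil_cat H) \<sigma> \<tau> q"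
    if "\<sigma> \<in> Stil_block H ` Mor H" "\<tau> \<in> Stil_block H ` Mor H" "\<mu> \<in> Stil_block H ` Mor H"
      and "p \<in> \<mu>" "q \<in> \<mu>" for \<sigma> \<tau> \<mu> p q
    using that pset_Stil_block[OF G] by (cases p, cases q) (auto simp: eqpoll_iff_card)
  then show ?thesis unfolding quasi_schemoid_def using Stil_category Stil_partition[OF G] by blast
qed

lemma Stil_assoc_schemoid:
  assumes G: "groupoid H"
  shows "assoc_schemoid (Stil H)"
proof -
  have "\<forall>p\<in>\<sigma>. snd p = fst p"
    if s: "\<sigma> \<in> Stil_block H ` Mor H" "\<exists>p\<in>\<sigma>. snd p = fst p" for \<sigma>
  proof -
    obtain c where c: "\<sigma> = Stil_block H c" using s(1) by blast
    obtain p where "p \<in> \<sigma>" "snd p = fst p" using s(2) by blast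
    then have "(fst p, fst p) \<in> \<sigma>" by (metis prod.collapse)
    then show ?thesis using Stil_block_diag_subset[OF G, of "fst p" c] c by auto
  qed
  moreover have "(\<lambda>(f, g). (g, f)) ` \<sigma> \<in> Stil_block H ` Mor H" if "\<sigma> \<in> Stil_block H ` Mor H" for \<sigma>
    using that Stil_block_swap[OF G] G by auto
  moreover have "contra_endofunctor (Stil_cat H) (\<lambda>f. f) (\<lambda>(f, g). (g, f))"
    unfolding contra_endofunctor_def by auto
  ultimately show ?thesis unfolding assoc_schemoid_def using Stil_quasi_schemoid[OF G] by auto
qed

lemma J0_Stil: "J0 (Stil H) = (\<lambda>g. (g, g)) ` Mor H"
  unfolding J0_def by simp

lemma Stil_unital:
  assumes G: "groupoid H"
  shows "unital (Stil H)"
  unfolding unital_def J0_Stil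
  using Stil_assoc_schemoid[OF G] Stil_block_diag_subset[OF G] by auto

lemma Stil_semi_thin:
  assumes G: "groupoid H"
  shows "semi_thin (Stil H)"
proof -
  have "\<forall>\<sigma>\<in>Stil_block H ` Mor H. \<forall>p\<in>\<sigma>. \<forall>q\<in>\<sigma>.
      Dom (Stil_cat H) p = Dom (Stil_cat H) q \<longrightarrow> p = q"
  proof (intro ballI impI)
    fix \<sigma> p q
    assume s: "\<sigma> \<in> Stil_block H ` Mor H" "p \<in> \<sigma>" "q \<in> \<sigma>" "Dom (Stil_cat H) p = Dom (Stil_cat H) q"
    obtain c where c: "c \<in> Mor H" "\<sigma> = Stil_block H c" using s(1) by blast
    obtain k l k' l' where kl: "p = (k, l)" "q = (k', l')" by fastforce
    have k: "k \<in> Mor H" "Dom H k = Cod H c" "k' \<in> Mor H" "Dom H k' = Cod H c"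
        "Comp H k c = Comp H k' c"
      using s c kl Stil_block_iff[OF G c(1)] by auto
    have "k = k'" by (rule gpd_cancel_right[OF G c(1) k(1,3)]) (use k in simp_all)
    then show "p = q" using s(4) kl by simp
  qed
  moreover have "\<forall>p\<in>Mor (Stil_cat H). (\<lambda>(f, g). (g, f)) p = ginv (Stil_cat H) p"
    by (auto simp: Stil_ginv)
  ultimately show ?thesis
    unfolding semi_thin_def Stil_simps by (intro conjI Stil_unital[OF G] Stil_groupoid)
qed

lemma conn_Stil_cat: "(x, v) \<in> conn (Stil_cat H) \<Longrightarrow> Cod H x = Cod H v"
  unfolding conn_def by (induction rule: rtrancl_induct) auto

lemma S0_Stil:
  assumes G: "groupoid H"
  shows "S0 (Stil H) = Stil_block H ` Idm H ` Obj H"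
proof
  show "S0 (Stil H) \<subseteq> Stil_block H ` Idm H ` Obj H"
  proof
    fix \<sigma> assume "\<sigma> \<in> S0 (Stil H)"
    then obtain c g where "\<sigma> = Stil_block H c" "(g, g) \<in> \<sigma>"
      unfolding S0_def J0_Stil by auto
    then show "\<sigma> \<in> Stil_block H ` Idm H ` Obj H" using Stil_block_diag[OF G] by blast
  qed
  show "Stil_block H ` Idm H ` Obj H \<subseteq> S0 (Stil H)"
  proof
    fix \<sigma> assume "\<sigma> \<in> Stil_block H ` Idm H ` Obj H"
    then obtain y where y: "y \<in> Obj H" "\<sigma> = Stil_block H (Idm H y)" by auto
    then have "(Idm H y, Idm H y) \<in> \<sigma> \<inter> J0 (Stil H)"
      unfolding J0_Stil using Stil_block_idm_iff[OF G] G by auto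
    then show "\<sigma> \<in> S0 (Stil H)" unfolding S0_def using y G by auto
  qed
qed

lemma Stil_thin:
  assumes G: "groupoid H"
  shows "thin_smd (Stil H)"
proof -
  have base: "\<exists>!v. v \<in> Idm H ` Obj H \<and> (x, v) \<in> conn (Stil_cat H)" if x: "x \<in> Mor H" for x
  proof
    have "(Idm H (Cod H x), x) \<in> Mor (Stil_cat H)" using x G by simp
    then have "(x, Idm H (Cod H x)) \<in> conn (Stil_cat H)"
      unfolding conn_def by (intro r_into_rtrancl) force
    then show "Idm H (Cod H x) \<in> Idm H ` Obj H \<and> (x, Idm H (Cod H x)) \<in> conn (Stil_cat H)"
      using x G by simp
  qed (use conn_Stil_cat G in fastforce)
  have block_idm: "block_of (Stil_block H ` Mor H) (Idm H y, Idm H y) = Stil_block H (Idm H y)"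
    if "y \<in> Obj H" for y
    using Stil_block_of[OF G, of "Idm H y" "Idm H y"] G that by simp
  have "inj_on (\<lambda>v. block_of (Stil_block H ` Mor H) (v, v)) (Idm H ` Obj H)"
  proof (rule inj_onI)
    fix v w assume "v \<in> Idm H ` Obj H" "w \<in> Idm H ` Obj H"
      and eq: "block_of (Stil_block H ` Mor H) (v, v) = block_of (Stil_block H ` Mor H) (w, w)"
    then obtain y z where yz: "y \<in> Obj H" "z \<in> Obj H" "v = Idm H y" "w = Idm H z" by auto
    then have "(Idm H y, Idm H y) \<in> Stil_block H (Idm H z)"
      using eq block_idm Stil_block_idm_iff[OF G yz(1)] G by auto
    then show "v = w" using yz Stil_block_idm_iff[OF G yz(2)] G by simp
  qed
  moreover have "(\<lambda>v. block_of (Stil_block H ` Mor H) (v, v)) ` Idm H ` Obj H = S0 (Stil H)"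
    unfolding S0_Stil[OF G] using block_idm by (auto simp: image_image)
  ultimately show ?thesis
    unfolding thin_smd_def Hom_def bij_betw_def using Stil_semi_thin[OF G] base G by auto
qed

section \<open>The functor S~ is fully faithful\<close>

lemma Stil_fun_is_functor:
  assumes F: "is_functor H K F"
  shows "is_functor (Stil_cat H) (Stil_cat K) (Stil_fun H F)"
  using is_functorD(6,8)[OF F] unfolding is_functor_def Stil_fun_def
  by (intro conjI Stil_category) (auto simp: case_prod_beta)

lemma Stil_fun_block:
  assumes G: "groupoid H" and GK: "groupoid K" and F: "is_functor H K F" and a: "a \<in> Mor H"
  shows "snd (Stil_fun H F) ` Stil_block H a \<subseteq> Stil_block K (snd F a)"
proof
  fix q assume "q \<in> snd (Stil_fun H F) ` Stil_block H a"
  then obtain k l where kl: "(k, l) \<in> Stil_block H a" "q = snd (Stil_fun H F) (k, l)" by auto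
  have k: "k \<in> Mor H" "Dom H k = Cod H a" "l = Comp H k a" using kl Stil_block_iff[OF G a] by auto
  have "(k, l) \<in> Mor (Stil_cat H)" by (rule subsetD[OF Stil_block_subset kl(1)])
  then have "q = (snd F k, snd F l)" using kl(2) unfolding Stil_fun_def by simp
  then show "q \<in> Stil_block K (snd F a)"
    using Stil_block_iff[OF GK is_functorD(6)[OF F a]] is_functorD[OF F] k a by simp
qed

lemma Stil_fun_smd_morph:
  assumes G: "groupoid H" and GK: "groupoid K" and F: "is_functor H K F"
  shows "smd_morph (Stil H) (Stil K) (Stil_fun H F)"
proof -
  have "\<forall>\<sigma>\<in>Blocks (Stil H). \<exists>\<tau>\<in>Blocks (Stil K). snd (Stil_fun H F) ` \<sigma> \<subseteq> \<tau>"
  proof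
    fix \<sigma> assume "\<sigma> \<in> Blocks (Stil H)"
    then obtain a where a: "a \<in> Mor H" "\<sigma> = Stil_block H a" by auto
    then show "\<exists>\<tau>\<in>Blocks (Stil K). snd (Stil_fun H F) ` \<sigma> \<subseteq> \<tau>"
      using Stil_fun_block[OF G GK F a(1)] is_functorD(6)[OF F a(1)] by auto
  qed
  moreover have "\<forall>p\<in>Mor (Cat (Stil H)).
      snd (Stil_fun H F) (Tmor (Stil H) p) = Tmor (Stil K) (snd (Stil_fun H F) p)"
    unfolding Stil_fun_def by auto
  moreover have "fst (Stil_fun H F) ` Base (Stil H) \<subseteq> Base (Stil K)"
    unfolding Stil_fun_def using is_functorD[OF F] by auto
  moreover have
    "\<forall>x\<in>Obj (Cat (Stil H)).
      fst (Stil_fun H F) (Tob (Stil H) x) = Tob (Stil K) (fst (Stil_fun H F) x)"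
    by simp
  moreover have "is_functor (Cat (Stil H)) (Cat (Stil K)) (Stil_fun H F)"
    using Stil_fun_is_functor[OF F] by simp
  ultimately show ?thesis unfolding smd_morph_def by blast
qed

lemma Stil_fun_fid: "Stil_fun H (fid H) = fid (Cat (Stil H))"
  unfolding Stil_fun_def fid_def by (auto intro!: restrict_ext)

lemma Stil_fun_fcomp:
  assumes "is_functor H K F"
  shows "Stil_fun H (fcomp H G F) = fcomp (Cat (Stil H)) (Stil_fun K G) (Stil_fun H F)"
  using is_functorD(6,8)[OF assms] unfolding Stil_fun_def fcomp_def
  by (auto intro!: restrict_ext)

lemma Stil_fun_inj:
  assumes F: "is_functor H K F" and F': "is_functor H K F'" and eq: "Stil_fun H F = Stil_fun H F'"
  shows "F = F'"
proof -
  have mor: "snd F f = snd F' f" if "f \<in> Mor H" for f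
    using arg_cong[OF eq, of "\<lambda>F. fst F f"] that unfolding Stil_fun_def by simp
  have "fst F x = fst F' x" if x: "x \<in> Obj H" for x
    using is_functorD(1,7)[OF F] is_functorD(7)[OF F'] mor[of "Idm H x"] x
    by (metis cat_idm cat_idm_dom)
  then show ?thesis using functor_eqI[OF F F'] mor by blast
qed

text \<open>Fullness: a morphism \<open>S~(H) \<rightarrow> S~(K)\<close> is determined by its object map \<open>g\<close>, and
  preservation of the blocks of \<open>H\<close> forces \<open>g\<close> to be a functor \<open>H \<rightarrow> K\<close>.\<close>

lemma Stil_morph_snd:
  assumes "is_functor (Stil_cat H) (Stil_cat K) Gm" "p \<in> Mor (Stil_cat H)"
  shows "snd Gm p = (fst Gm (fst p), fst Gm (snd p))"
  using is_functorD(7,8)[OF assms] by (simp add: prod_eq_iff)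

lemma Stil_morph_comp:
  assumes G: "groupoid H" and GK: "groupoid K" and M: "smd_morph (Stil H) (Stil K) Gm"
    and a: "a \<in> Mor H" and k: "k \<in> Mor H" and ka: "Dom H k = Cod H a"
  shows "Dom K (fst Gm k) = Cod K (fst Gm a) \<and> fst Gm (Comp H k a) = Comp K (fst Gm k) (fst Gm a)"
proof -
  have Gm: "is_functor (Stil_cat H) (Stil_cat K) Gm" using M unfolding smd_morph_def by simp
  obtain c where c: "c \<in> Mor K" "snd Gm ` Stil_block H a \<subseteq> Stil_block K c"
    using M a unfolding smd_morph_def by auto
  have "(fst Gm (Idm H (Cod H a)), fst Gm a) \<in> Stil_block K c"
    using c(2) Stil_idm_in_block[OF G a] Stil_morph_snd[OF Gm] Stil_block_subset by force
  moreover have "fst Gm (Idm H (Cod H a)) \<in> Idm K ` Obj K"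
    using M G a unfolding smd_morph_def by auto
  ultimately have "c = fst Gm a" using Stil_block_iff[OF GK c(1)] GK c(1) by auto
  moreover have "(fst Gm k, fst Gm (Comp H k a)) \<in> Stil_block K c"
    using c(2) Stil_block_iff[OF G a, of k "Comp H k a"] k ka Stil_morph_snd[OF Gm]
      Stil_block_subset
    by force
  ultimately show ?thesis using Stil_block_iff[OF GK c(1)] by simp
qed

lemma Stil_fun_surj:
  assumes G: "groupoid H" and GK: "groupoid K" and M: "smd_morph (Stil H) (Stil K) Gm"
  shows "\<exists>F. is_functor H K F \<and> Stil_fun H F = Gm"
proof -
  have Gm: "is_functor (Stil_cat H) (Stil_cat K) Gm" using M unfolding smd_morph_def by simp
  note comp = Stil_morph_comp[OF G GK M]
  define fo where "fo = restrict (\<lambda>x. Dom K (fst Gm (Idm H x))) (Obj H)"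
  have idm: "fst Gm (Idm H y) = Idm K (fo y)" "fo y \<in> Obj K" if y: "y \<in> Obj H" for y
  proof -
    have "fst Gm (Idm H y) \<in> Idm K ` Obj K" using M y unfolding smd_morph_def by auto
    then obtain z where "z \<in> Obj K" "fst Gm (Idm H y) = Idm K z" by blast
    then show "fst Gm (Idm H y) = Idm K (fo y)" "fo y \<in> Obj K" using y GK unfolding fo_def
      by simp_all
  qed
  have dom: "Dom K (fst Gm f) = fo (Dom H f)" and cod: "Cod K (fst Gm f) = fo (Cod H f)"
    if f: "f \<in> Mor H" for f
    using comp[of "Idm H (Dom H f)" f] comp[of f "Idm H (Cod H f)"] idm[of "Dom H f"]
      idm[of "Cod H f"] f G GK
    by auto
  have "fst Gm (Comp H g f) = Comp K (fst Gm g) (fst Gm f)"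
    if "f \<in> Mor H" "g \<in> Mor H" "Cod H f = Dom H g" for f g
    using comp that by simp
  then have "is_functor H K (fo, fst Gm)"
    unfolding is_functor_def fst_conv snd_conv using G GK is_functorD(3,5)[OF Gm]
    by (intro conjI ballI impI) (simp_all add: idm dom cod, simp add: fo_def)
  moreover have "Stil_fun H (fo, fst Gm) = Gm"
  proof (rule prod_eqI)
    show "fst (Stil_fun H (fo, fst Gm)) = fst Gm"
      unfolding Stil_fun_def using is_functorD(3)[OF Gm] by (simp add: extensional_restrict)
    show "snd (Stil_fun H (fo, fst Gm)) = snd Gm"
      unfolding Stil_fun_def using is_functorD(4)[OF Gm] Stil_morph_snd[OF Gm]
      by (intro extensionalityI[of _ "Mor (Stil_cat H)"]) auto
  qed
  ultimately show ?thesis by blast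
qed

lemma Stil_fun_bij:
  assumes G: "groupoid H" and GK: "groupoid K"
  shows "bij_betw (Stil_fun H) (gpd_hom H K) (smd_hom (Stil H) (Stil K))"
  unfolding bij_betw_def
proof
  show "inj_on (Stil_fun H) (gpd_hom H K)"
    unfolding gpd_hom_def by (rule inj_onI) (use Stil_fun_inj in blast)
  show "Stil_fun H ` gpd_hom H K = smd_hom (Stil H) (Stil K)"
    unfolding gpd_hom_def smd_hom_def
    using Stil_fun_smd_morph[OF G GK] Stil_fun_surj[OF G GK] by blast
qed

section \<open>Thin schemoids and the groupoid R~\<close>

locale thin_schemoid =
  fixes X :: "('o,'m) schemoid"
  assumes thin: "thin_smd X"
begin

abbreviation "C \<equiv> Cat X"
abbreviation "S \<equiv> Blocks X"

lemma semi_thin: "semi_thin X" using thin unfolding thin_smd_def by blast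
lemma unital: "unital X" using semi_thin unfolding semi_thin_def by blast
lemma assoc: "assoc_schemoid X" using unital unfolding unital_def by blast
lemma quasi: "quasi_schemoid C S" using assoc unfolding assoc_schemoid_def by blast
lemma gpd: "groupoid C" using semi_thin unfolding semi_thin_def by blast
lemma cat: "category C" using gpd by blast
lemma partition: "partition_of (Mor C) S" using quasi unfolding quasi_schemoid_def by blast

lemma block_nonempty: "\<sigma> \<in> S \<Longrightarrow> \<sigma> \<noteq> {}"
  using partition unfolding partition_of_def by blast

lemma block_mor: "\<sigma> \<in> S \<Longrightarrow> f \<in> \<sigma> \<Longrightarrow> f \<in> Mor C"
  using partition unfolding partition_of_def by blast

lemma block_of_block: "f \<in> Mor C \<Longrightarrow> block_of S f \<in> S"
  using block_of_in[OF partition] by blast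

lemma mem_block_of: "f \<in> Mor C \<Longrightarrow> f \<in> block_of S f"
  using block_of_in[OF partition] by blast

lemma block_of_eq': "\<sigma> \<in> S \<Longrightarrow> f \<in> \<sigma> \<Longrightarrow> block_of S f = \<sigma>"
  using block_of_eq[OF partition] by blast

lemma block_unique: "\<sigma> \<in> S \<Longrightarrow> \<tau> \<in> S \<Longrightarrow> f \<in> \<sigma> \<Longrightarrow> f \<in> \<tau> \<Longrightarrow> \<sigma> = \<tau>"
  using block_of_eq' by metis

lemma pset_eqpoll:
  "\<sigma> \<in> S \<Longrightarrow> \<tau> \<in> S \<Longrightarrow> \<mu> \<in> S \<Longrightarrow> f \<in> \<mu> \<Longrightarrow> g \<in> \<mu> \<Longrightarrow> pset C \<sigma> \<tau> f \<approx> pset C \<sigma> \<tau> g"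
  using quasi unfolding quasi_schemoid_def by blast

lemma block_dom_inj: "\<sigma> \<in> S \<Longrightarrow> f \<in> \<sigma> \<Longrightarrow> g \<in> \<sigma> \<Longrightarrow> Dom C f = Dom C g \<Longrightarrow> f = g"
  using semi_thin unfolding semi_thin_def by blast

lemma Tmor_eq_ginv: "f \<in> Mor C \<Longrightarrow> Tmor X f = ginv C f"
  using semi_thin unfolding semi_thin_def by blast

lemma ginv_block: "\<sigma> \<in> S \<Longrightarrow> ginv C ` \<sigma> \<in> S"
proof -
  assume s: "\<sigma> \<in> S"
  then have "Tmor X ` \<sigma> = ginv C ` \<sigma>" using Tmor_eq_ginv block_mor by simp
  then show ?thesis using assoc s unfolding assoc_schemoid_def by metis
qed

lemma block_cod_inj:
  assumes s: "\<sigma> \<in> S" and f: "f \<in> \<sigma>" and g: "g \<in> \<sigma>" and eq: "Cod C f = Cod C g"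
  shows "f = g"
proof -
  have "ginv C f = ginv C g"
    using block_dom_inj[OF ginv_block[OF s]] f g eq block_mor[OF s] gpd by simp
  then show ?thesis using block_mor[OF s] f g gpd by (metis ginv_ginv)
qed

lemma hom_unique:
  "f \<in> Mor C \<Longrightarrow> g \<in> Mor C \<Longrightarrow> Dom C f = Dom C g \<Longrightarrow> Cod C f = Cod C g \<Longrightarrow> f = g"
  using thin cat unfolding thin_smd_def Hom_def by auto

lemma Base_subset: "Base X \<subseteq> Obj C"
  using thin unfolding thin_smd_def by blast

lemma base_point_unique: "x \<in> Obj C \<Longrightarrow> \<exists>!v. v \<in> Base X \<and> (x, v) \<in> conn C"
  using thin unfolding thin_smd_def by blast

lemma unit_block_bij: "bij_betw (\<lambda>v. block_of S (Idm C v)) (Base X) (S0 X)"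
  using thin unfolding thin_smd_def by blast

lemma Tob_eq: assumes x: "x \<in> Obj C" shows "Tob X x = x"
proof -
  have "contra_endofunctor C (Tob X) (Tmor X)" using assoc unfolding assoc_schemoid_def by blast
  then have "Tmor X (Idm C x) = Idm C (Tob X x)" "Tob X x \<in> Obj C"
    using x unfolding contra_endofunctor_def by auto
  moreover have "Tmor X (Idm C x) = Idm C x" using Tmor_eq_ginv[of "Idm C x"] x gpd by simp
  ultimately show ?thesis using cat x by (metis cat_idm_dom)
qed

lemma unit_block:
  assumes "x \<in> Obj C" shows "block_of S (Idm C x) \<in> S" "Idm C x \<in> block_of S (Idm C x)"
  using block_of_block mem_block_of cat assms by simp_all

lemma unit_block_J0: "x \<in> Obj C \<Longrightarrow> block_of S (Idm C x) \<subseteq> J0 X"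
  using unital unit_block[of x] unfolding unital_def J0_def by blast

lemma S0_iff: "\<alpha> \<in> S0 X \<longleftrightarrow> \<alpha> \<in> S \<and> \<alpha> \<inter> J0 X \<noteq> {}"
  unfolding S0_def by simp

lemma S0_block: "\<alpha> \<in> S0 X \<Longrightarrow> \<alpha> \<in> S" using S0_iff by blast

lemma S0_J0: "\<alpha> \<in> S0 X \<Longrightarrow> \<alpha> \<subseteq> J0 X"
  using unital unfolding S0_iff unital_def by blast

lemma S0_unit_block: "\<alpha> \<in> S0 X \<Longrightarrow> \<exists>x\<in>Obj C. Idm C x \<in> \<alpha> \<and> \<alpha> = block_of S (Idm C x)"
  unfolding S0_iff J0_def using block_of_eq' by blast

lemma unit_block_S0: "x \<in> Obj C \<Longrightarrow> block_of S (Idm C x) \<in> S0 X"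
  using unit_block unfolding S0_iff J0_def by auto

lemma mem_J0_iff: "h \<in> J0 X \<longleftrightarrow> (\<exists>x\<in>Obj C. h = Idm C x)" unfolding J0_def by auto

end

text \<open>In a semi-thin schemoid the identities of the domains of all members of a block \<open>\<sigma>\<close> lie in
  one block, and likewise for the codomains (\<open>unit_block_dom_eq\<close> below); these two blocks are
  the source and target of \<open>\<sigma>\<close> in \<open>R~(X)\<close>, read off from an arbitrary member.\<close>

definition src_block :: "('o,'m) schemoid \<Rightarrow> 'm set \<Rightarrow> 'm set" where
  "src_block X \<sigma> = block_of (Blocks X) (Idm (Cat X) (Dom (Cat X) (SOME f. f \<in> \<sigma>)))"

definition tgt_block :: "('o,'m) schemoid \<Rightarrow> 'm set \<Rightarrow> 'm set" where
  "tgt_block X \<sigma> = block_of (Blocks X) (Idm (Cat X) (Cod (Cat X) (SOME f. f \<in> \<sigma>)))"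

definition Rtil_arr :: "('o,'m) schemoid \<Rightarrow> 'm set \<Rightarrow> 'm set \<times> 'm set \<times> 'm set" where
  "Rtil_arr X \<sigma> = (src_block X \<sigma>, \<sigma>, tgt_block X \<sigma>)"

lemma Rtil_arr_inj: "Rtil_arr X \<sigma> = Rtil_arr X \<tau> \<Longrightarrow> \<sigma> = \<tau>"
  unfolding Rtil_arr_def by simp

lemma Rtil_arr_components[simp]:
  "fst (Rtil_arr X \<sigma>) = src_block X \<sigma>" "fst (snd (Rtil_arr X \<sigma>)) = \<sigma>"
  "snd (snd (Rtil_arr X \<sigma>)) = tgt_block X \<sigma>"
  by (simp_all add: Rtil_arr_def)

lemma Rtil_simps[simp]:
  "Obj (Rtil X) = S0 X" "Dom (Rtil X) = fst" "Cod (Rtil X) = (\<lambda>t. snd (snd t))"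
  "Idm (Rtil X) = (\<lambda>\<alpha>. (\<alpha>, \<alpha>, \<alpha>))"
  by (simp_all add: Rtil_def)

context thin_schemoid
begin

lemma unit_block_dom_eq:
  assumes s: "\<sigma> \<in> S" and f: "f \<in> \<sigma>" and f': "f' \<in> \<sigma>"
  shows "block_of S (Idm C (Dom C f')) = block_of S (Idm C (Dom C f))"
proof -
  have fm: "f \<in> Mor C" "f' \<in> Mor C" using s f f' block_mor by auto
  define \<alpha> where "\<alpha> = block_of S (Idm C (Dom C f))"
  have \<alpha>: "\<alpha> \<in> S" "Idm C (Dom C f) \<in> \<alpha>" "\<alpha> \<subseteq> J0 X"
    using unit_block unit_block_J0 fm cat unfolding \<alpha>_def by auto
  have "(f, Idm C (Dom C f)) \<in> pset C \<sigma> \<alpha> f" unfolding pset_def using f \<alpha> fm cat by simp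
  then have "pset C \<sigma> \<alpha> f' \<noteq> {}" using eqpoll_nonempty[OF pset_eqpoll[OF s \<alpha>(1) s f f']] by blast
  then obtain a b where ab: "a \<in> \<sigma>" "b \<in> \<alpha>" "Dom C a = Cod C b" "Comp C a b = f'"
    unfolding pset_def by auto
  obtain x where x: "x \<in> Obj C" "b = Idm C x" using ab(2) \<alpha>(3) mem_J0_iff by blast
  have "a = f'" using ab x block_mor[OF s] cat by simp
  then have "Idm C (Dom C f') \<in> \<alpha>" using ab x cat by simp
  then show ?thesis using block_of_eq'[OF \<alpha>(1)] unfolding \<alpha>_def by simp
qed

lemma unit_block_cod_eq:
  assumes s: "\<sigma> \<in> S" and f: "f \<in> \<sigma>" and f': "f' \<in> \<sigma>"
  shows "block_of S (Idm C (Cod C f')) = block_of S (Idm C (Cod C f))"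
  using unit_block_dom_eq[OF ginv_block[OF s], of "ginv C f" "ginv C f'"] f f' block_mor[OF s] gpd
  by simp

lemma some_in_block: "\<sigma> \<in> S \<Longrightarrow> (SOME f. f \<in> \<sigma>) \<in> \<sigma>"
  using block_nonempty by (simp add: some_in_eq)

lemma src_block_eq: "\<sigma> \<in> S \<Longrightarrow> f \<in> \<sigma> \<Longrightarrow> src_block X \<sigma> = block_of S (Idm C (Dom C f))"
  unfolding src_block_def using unit_block_dom_eq some_in_block by metis

lemma tgt_block_eq: "\<sigma> \<in> S \<Longrightarrow> f \<in> \<sigma> \<Longrightarrow> tgt_block X \<sigma> = block_of S (Idm C (Cod C f))"
  unfolding tgt_block_def using unit_block_cod_eq some_in_block by metis

lemma src_block_S0: "\<sigma> \<in> S \<Longrightarrow> src_block X \<sigma> \<in> S0 X"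
  unfolding src_block_def using some_in_block block_mor unit_block_S0 cat by simp

lemma tgt_block_S0: "\<sigma> \<in> S \<Longrightarrow> tgt_block X \<sigma> \<in> S0 X"
  unfolding tgt_block_def using some_in_block block_mor unit_block_S0 cat by simp

lemma src_tgt_block_ginv:
  assumes s: "\<sigma> \<in> S"
  shows "src_block X (ginv C ` \<sigma>) = tgt_block X \<sigma>" "tgt_block X (ginv C ` \<sigma>) = src_block X \<sigma>"
proof -
  obtain f where f: "f \<in> \<sigma>" using block_nonempty[OF s] by blast
  then have "ginv C f \<in> ginv C ` \<sigma>" by simp
  then show "src_block X (ginv C ` \<sigma>) = tgt_block X \<sigma>" "tgt_block X (ginv C ` \<sigma>) = src_block X \<sigma>"
    using src_block_eq[OF ginv_block[OF s]] tgt_block_eq[OF ginv_block[OF s]]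
      src_block_eq[OF s f] tgt_block_eq[OF s f] block_mor[OF s f] gpd by simp_all
qed

lemma Rtil_arr_S0:
  assumes "\<alpha> \<in> S0 X" shows "Rtil_arr X \<alpha> = (\<alpha>, \<alpha>, \<alpha>)"
proof -
  obtain x where "x \<in> Obj C" "Idm C x \<in> \<alpha>" "\<alpha> = block_of S (Idm C x)"
    using S0_unit_block[OF assms] by blast
  then show ?thesis
    unfolding Rtil_arr_def using src_block_eq tgt_block_eq S0_block[OF assms] cat by simp
qed

text \<open>The pair \<open>(f\<^sup>-\<^sup>1, f)\<close> factors the identity of \<open>Dom f\<close> through \<open>\<sigma>\<^sup>-\<^sup>1 \<times> \<sigma>\<close>; by the
  quasi-schemoid axiom so does every identity in the source block of \<open>\<sigma>\<close>.\<close>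

lemma block_has_dom:
  assumes s: "\<sigma> \<in> S" and x: "x \<in> Obj C" and ix: "Idm C x \<in> src_block X \<sigma>"
  shows "\<exists>f\<in>\<sigma>. Dom C f = x"
proof -
  obtain f0 where f0: "f0 \<in> \<sigma>" using block_nonempty[OF s] by blast
  have fm: "f0 \<in> Mor C" using f0 s block_mor by auto
  let ?\<alpha> = "src_block X \<sigma>"
  have \<alpha>: "?\<alpha> \<in> S" "Idm C (Dom C f0) \<in> ?\<alpha>"
    using src_block_S0[OF s] S0_block src_block_eq[OF s f0] unit_block fm cat by auto
  have "(ginv C f0, f0) \<in> pset C (ginv C ` \<sigma>) \<sigma> (Idm C (Dom C f0))"
    unfolding pset_def using f0 fm gpd by simp
  then have "pset C (ginv C ` \<sigma>) \<sigma> (Idm C x) \<noteq> {}"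
    using eqpoll_nonempty[OF pset_eqpoll[OF ginv_block[OF s] s \<alpha>(1) \<alpha>(2) ix]] by blast
  then obtain a b where ab: "a \<in> ginv C ` \<sigma>" "b \<in> \<sigma>" "Dom C a = Cod C b" "Comp C a b = Idm C x"
    unfolding pset_def by auto
  then have "Dom C b = x"
    using cat_comp_dom[OF cat, of b a] block_mor[OF s] block_mor[OF ginv_block[OF s]] x cat by force
  then show ?thesis using ab by blast
qed

lemma block_has_cod:
  assumes s: "\<sigma> \<in> S" and y: "y \<in> Obj C" and iy: "Idm C y \<in> tgt_block X \<sigma>"
  shows "\<exists>f\<in>\<sigma>. Cod C f = y"
proof -
  obtain f where "f \<in> ginv C ` \<sigma>" "Dom C f = y"
    using block_has_dom[OF ginv_block[OF s] y] iy src_tgt_block_ginv(1)[OF s] by auto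
  then show ?thesis using block_mor[OF s] gpd by auto
qed

lemma pset_right_unit:
  assumes s: "\<sigma> \<in> S" and \<alpha>: "\<alpha> \<in> S0 X" and f: "f \<in> \<sigma>"
  shows "pset C \<sigma> \<alpha> f = (if Idm C (Dom C f) \<in> \<alpha> then {(f, Idm C (Dom C f))} else {})"
proof -
  have "a = f \<and> b = Idm C (Dom C f)" if "(a, b) \<in> pset C \<sigma> \<alpha> f" for a b
  proof -
    from that have ab: "a \<in> \<sigma>" "b \<in> \<alpha>" "Dom C a = Cod C b" "Comp C a b = f"
      unfolding pset_def by auto
    obtain x where "x \<in> Obj C" "b = Idm C x" using ab(2) S0_J0[OF \<alpha>] mem_J0_iff by blast
    then show ?thesis using ab block_mor[OF s] cat by auto
  qed
  then show ?thesis using f block_mor[OF s] cat unfolding pset_def by auto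
qed

lemma pset_left_unit:
  assumes s: "\<sigma> \<in> S" and \<beta>: "\<beta> \<in> S0 X" and f: "f \<in> \<sigma>"
  shows "pset C \<beta> \<sigma> f = (if Idm C (Cod C f) \<in> \<beta> then {(Idm C (Cod C f), f)} else {})"
proof -
  have "a = Idm C (Cod C f) \<and> b = f" if "(a, b) \<in> pset C \<beta> \<sigma> f" for a b
  proof -
    from that have ab: "a \<in> \<beta>" "b \<in> \<sigma>" "Dom C a = Cod C b" "Comp C a b = f"
      unfolding pset_def by auto
    obtain x where "x \<in> Obj C" "a = Idm C x" using ab(1) S0_J0[OF \<beta>] mem_J0_iff by blast
    then show ?thesis using ab block_mor[OF s] cat by auto
  qed
  then show ?thesis using f block_mor[OF s] cat unfolding pset_def by auto
qed

lemma pnum_src_iff: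
  assumes s: "\<sigma> \<in> S" and \<alpha>: "\<alpha> \<in> S0 X"
  shows "pnum C \<sigma> \<alpha> \<sigma> = 1 \<longleftrightarrow> \<alpha> = src_block X \<sigma>"
proof -
  define f where "f = (SOME f. f \<in> \<sigma>)"
  have f: "f \<in> \<sigma>" "Dom C f \<in> Obj C" using some_in_block[OF s] block_mor[OF s] cat unfolding f_def
    by auto
  have "pnum C \<sigma> \<alpha> \<sigma> = 1 \<longleftrightarrow> Idm C (Dom C f) \<in> \<alpha>"
    using pset_right_unit[OF s \<alpha> f(1)] unfolding pnum_def f_def[symmetric] by simp
  also have "\<dots> \<longleftrightarrow> \<alpha> = src_block X \<sigma>"
    using src_block_eq[OF s f(1)] block_of_eq'[OF S0_block[OF \<alpha>]] unit_block[OF f(2)] by auto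
  finally show ?thesis .
qed

lemma pnum_tgt_iff:
  assumes s: "\<sigma> \<in> S" and \<beta>: "\<beta> \<in> S0 X"
  shows "pnum C \<beta> \<sigma> \<sigma> = 1 \<longleftrightarrow> \<beta> = tgt_block X \<sigma>"
proof -
  define f where "f = (SOME f. f \<in> \<sigma>)"
  have f: "f \<in> \<sigma>" "Cod C f \<in> Obj C" using some_in_block[OF s] block_mor[OF s] cat unfolding f_def
    by auto
  have "pnum C \<beta> \<sigma> \<sigma> = 1 \<longleftrightarrow> Idm C (Cod C f) \<in> \<beta>"
    using pset_left_unit[OF s \<beta> f(1)] unfolding pnum_def f_def[symmetric] by simp
  also have "\<dots> \<longleftrightarrow> \<beta> = tgt_block X \<sigma>"
    using tgt_block_eq[OF s f(1)] block_of_eq'[OF S0_block[OF \<beta>]] unit_block[OF f(2)] by auto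
  finally show ?thesis .
qed

lemma Rtil_mor_iff: "t \<in> Mor (Rtil X) \<longleftrightarrow> (\<exists>\<sigma>\<in>S. t = Rtil_arr X \<sigma>)"
  unfolding Rtil_def Rtil_arr_def using pnum_src_iff pnum_tgt_iff src_block_S0 tgt_block_S0 by auto

lemma Rtil_arr_mor: "\<sigma> \<in> S \<Longrightarrow> Rtil_arr X \<sigma> \<in> Mor (Rtil X)"
  unfolding Rtil_mor_iff by blast

end

context thin_schemoid
begin

lemma pset_composable:
  assumes s: "\<sigma> \<in> S" and t: "\<tau> \<in> S" and a: "a \<in> \<tau>" and b: "b \<in> \<sigma>" and ab: "Dom C a = Cod C b"
  shows "pset C \<tau> \<sigma> (Comp C a b) = {(a, b)}"
proof
  have m: "a \<in> Mor C" "b \<in> Mor C" using a b s t block_mor by auto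
  show "{(a, b)} \<subseteq> pset C \<tau> \<sigma> (Comp C a b)" unfolding pset_def using a b ab by simp
  show "pset C \<tau> \<sigma> (Comp C a b) \<subseteq> {(a, b)}"
  proof
    fix p assume "p \<in> pset C \<tau> \<sigma> (Comp C a b)"
    then obtain x y where p: "p = (x, y)" "x \<in> \<tau>" "y \<in> \<sigma>" "Dom C x = Cod C y"
      and eq: "Comp C x y = Comp C a b"
      unfolding pset_def by auto
    have xm: "x \<in> Mor C" "y \<in> Mor C" using p s t block_mor by auto
    have "Dom C y = Dom C b" using arg_cong[OF eq, of "Dom C"] xm m p(4) ab cat by simp
    then have yb: "y = b" using block_dom_inj[OF s p(3) b] by simp
    have "x = a" by (rule gpd_cancel_right[OF gpd m(2) xm(1) m(1)]) (use p yb ab eq in simp_all)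
    then show "p \<in> {(a, b)}" using p yb by simp
  qed
qed

lemma block_comp_factor:
  assumes s: "\<sigma> \<in> S" and t: "\<tau> \<in> S" and a: "a \<in> \<tau>" and b: "b \<in> \<sigma>" and ab: "Dom C a = Cod C b"
    and m: "m \<in> block_of S (Comp C a b)"
  shows "\<exists>a'\<in>\<tau>. \<exists>b'\<in>\<sigma>. Dom C a' = Cod C b' \<and> Comp C a' b' = m"
proof -
  have cm: "Comp C a b \<in> Mor C" using a b s t block_mor ab cat by simp
  have "pset C \<tau> \<sigma> (Comp C a b) \<approx> pset C \<tau> \<sigma> m"
    by (rule pset_eqpoll[OF t s block_of_block[OF cm] mem_block_of[OF cm] m])
  then have "pset C \<tau> \<sigma> m \<noteq> {}" using eqpoll_nonempty pset_composable[OF s t a b ab] by blast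
  then show ?thesis unfolding pset_def by blast
qed

lemma block_of_comp_eq:
  assumes s: "\<sigma> \<in> S" and t: "\<tau> \<in> S" and a: "a \<in> \<tau>" "a' \<in> \<tau>" and b: "b \<in> \<sigma>" "b' \<in> \<sigma>"
    and ab: "Dom C a = Cod C b" "Dom C a' = Cod C b'"
  shows "block_of S (Comp C a' b') = block_of S (Comp C a b)"
proof -
  have mor: "a \<in> Mor C" "a' \<in> Mor C" "b \<in> Mor C" "b' \<in> Mor C" using a b s t block_mor by auto
  let ?\<mu> = "block_of S (Comp C a b)"
  have \<mu>: "?\<mu> \<in> S" "Comp C a b \<in> ?\<mu>" using block_of_block mem_block_of mor ab cat by simp_all
  have "src_block X ?\<mu> = block_of S (Idm C (Dom C b'))"
    using src_block_eq[OF \<mu>] unit_block_dom_eq[OF s b] mor ab cat by simp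
  then have "Idm C (Dom C b') \<in> src_block X ?\<mu>" using unit_block mor cat by simp
  then obtain m where m: "m \<in> ?\<mu>" "Dom C m = Dom C b'" using block_has_dom[OF \<mu>(1)] mor cat by blast
  obtain a'' b'' where f: "a'' \<in> \<tau>" "b'' \<in> \<sigma>" "Dom C a'' = Cod C b''" "Comp C a'' b'' = m"
    using block_comp_factor[OF s t a(1) b(1) ab(1) m(1)] by blast
  have "Dom C b'' = Dom C b'" using f m block_mor[OF s] block_mor[OF t] cat by force
  then have "b'' = b'" using block_dom_inj[OF s f(2) b(2)] by simp
  moreover have "a'' = a'" using block_dom_inj[OF t f(1) a(2)] f(3) ab(2) calculation by simp
  ultimately have "Comp C a' b' \<in> ?\<mu>" using f(4) m(1) by simp
  then show ?thesis using block_of_eq'[OF \<mu>(1)] by simp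
qed

lemma Rtil_comp_block:
  assumes s: "\<sigma> \<in> S" and t: "\<tau> \<in> S" and a: "a \<in> \<tau>" and b: "b \<in> \<sigma>" and ab: "Dom C a = Cod C b"
  shows "(THE \<mu>. \<mu> \<in> S \<and> pnum C \<tau> \<sigma> \<mu> = 1) = block_of S (Comp C a b)"
proof (rule the_equality)
  let ?\<mu> = "block_of S (Comp C a b)"
  have \<mu>: "?\<mu> \<in> S" "Comp C a b \<in> ?\<mu>" using block_of_block mem_block_of a b s t block_mor ab cat
    by simp_all
  have "pset C \<tau> \<sigma> (SOME f. f \<in> ?\<mu>) \<approx> {(a, b)}"
    using pset_eqpoll[OF t s \<mu>(1) some_in_block[OF \<mu>(1)] \<mu>(2)] pset_composable[OF s t a b ab]
    by simp
  then have "card (pset C \<tau> \<sigma> (SOME f. f \<in> ?\<mu>)) = 1" by (rule card_eq_1_if_eqpoll_singleton)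
  then show "?\<mu> \<in> S \<and> pnum C \<tau> \<sigma> ?\<mu> = 1" using \<mu>(1) unfolding pnum_def by simp
next
  fix \<mu> assume \<mu>: "\<mu> \<in> S \<and> pnum C \<tau> \<sigma> \<mu> = 1"
  then have "pset C \<tau> \<sigma> (SOME f. f \<in> \<mu>) \<noteq> {}" unfolding pnum_def by auto
  then obtain a' b' where f: "a' \<in> \<tau>" "b' \<in> \<sigma>" "Dom C a' = Cod C b'" "Comp C a' b' \<in> \<mu>"
    using some_in_block \<mu> unfolding pset_def by force
  then show "\<mu> = block_of S (Comp C a b)"
    using block_of_eq'[of \<mu>] \<mu> block_of_comp_eq[OF s t a f(1) b f(2) ab f(3)] by simp
qed

lemma src_tgt_block_comp:
  assumes s: "\<sigma> \<in> S" and t: "\<tau> \<in> S" and a: "a \<in> \<tau>" and b: "b \<in> \<sigma>" and ab: "Dom C a = Cod C b"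
  shows "src_block X (block_of S (Comp C a b)) = src_block X \<sigma>"
    "tgt_block X (block_of S (Comp C a b)) = tgt_block X \<tau>"
proof -
  have m: "a \<in> Mor C" "b \<in> Mor C" "Comp C a b \<in> Mor C" using a b s t block_mor ab cat by auto
  show "src_block X (block_of S (Comp C a b)) = src_block X \<sigma>"
    using src_block_eq[OF block_of_block mem_block_of, OF m(3) m(3)] src_block_eq[OF s b] m ab cat
    by simp
  show "tgt_block X (block_of S (Comp C a b)) = tgt_block X \<tau>"
    using tgt_block_eq[OF block_of_block mem_block_of, OF m(3) m(3)] tgt_block_eq[OF t a] m ab cat
    by simp
qed

lemma Rtil_mor_cases:
  assumes "t \<in> Mor (Rtil X)" obtains \<sigma> where "\<sigma> \<in> S" "t = Rtil_arr X \<sigma>"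
  using assms Rtil_mor_iff by blast

lemma Rtil_comp_arr:
  assumes s: "\<sigma> \<in> S" and t: "\<tau> \<in> S" and a: "a \<in> \<tau>" and b: "b \<in> \<sigma>" and ab: "Dom C a = Cod C b"
  shows "Comp (Rtil X) (Rtil_arr X \<tau>) (Rtil_arr X \<sigma>) = Rtil_arr X (block_of S (Comp C a b))"
  using Rtil_comp_block[OF assms] src_tgt_block_comp[OF assms]
  by (simp add: Rtil_def Rtil_arr_def)

lemma composable_members:
  assumes s: "\<sigma> \<in> S" and t: "\<tau> \<in> S" and e: "tgt_block X \<sigma> = src_block X \<tau>"
  obtains a b where "a \<in> \<tau>" "b \<in> \<sigma>" "Dom C a = Cod C b"
proof -
  obtain b where b: "b \<in> \<sigma>" using block_nonempty[OF s] by blast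
  have y: "Cod C b \<in> Obj C" using b s block_mor cat by simp
  then have "Idm C (Cod C b) \<in> src_block X \<tau>" using tgt_block_eq[OF s b] e unit_block by simp
  then show ?thesis using block_has_dom[OF t y] b that by blast
qed

lemma Rtil_comp_closed:
  assumes s: "\<sigma> \<in> S" and t: "\<tau> \<in> S" and e: "tgt_block X \<sigma> = src_block X \<tau>"
  shows "Comp (Rtil X) (Rtil_arr X \<tau>) (Rtil_arr X \<sigma>) \<in> Mor (Rtil X)"
    "Dom (Rtil X) (Comp (Rtil X) (Rtil_arr X \<tau>) (Rtil_arr X \<sigma>)) = src_block X \<sigma>"
    "Cod (Rtil X) (Comp (Rtil X) (Rtil_arr X \<tau>) (Rtil_arr X \<sigma>)) = tgt_block X \<tau>"
proof -
  obtain a b where ab: "a \<in> \<tau>" "b \<in> \<sigma>" "Dom C a = Cod C b" using composable_members[OF s t e] .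
  have "block_of S (Comp C a b) \<in> S" using ab s t block_mor block_of_block cat by simp
  then show "Comp (Rtil X) (Rtil_arr X \<tau>) (Rtil_arr X \<sigma>) \<in> Mor (Rtil X)"
    "Dom (Rtil X) (Comp (Rtil X) (Rtil_arr X \<tau>) (Rtil_arr X \<sigma>)) = src_block X \<sigma>"
    "Cod (Rtil X) (Comp (Rtil X) (Rtil_arr X \<tau>) (Rtil_arr X \<sigma>)) = tgt_block X \<tau>"
    using Rtil_comp_arr[OF s t ab] src_tgt_block_comp[OF s t ab] Rtil_arr_mor by simp_all
qed

lemma Rtil_comp_units:
  assumes s: "\<sigma> \<in> S"
  shows "Comp (Rtil X) (Rtil_arr X \<sigma>) (Rtil_arr X (src_block X \<sigma>)) = Rtil_arr X \<sigma>"
    "Comp (Rtil X) (Rtil_arr X (tgt_block X \<sigma>)) (Rtil_arr X \<sigma>) = Rtil_arr X \<sigma>"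
proof -
  obtain a where a: "a \<in> \<sigma>" using block_nonempty[OF s] by blast
  have m: "a \<in> Mor C" "Dom C a \<in> Obj C" "Cod C a \<in> Obj C" using a s block_mor cat by auto
  have blocks: "src_block X \<sigma> \<in> S" "tgt_block X \<sigma> \<in> S"
    using src_block_S0[OF s] tgt_block_S0[OF s] S0_block by auto
  have "Idm C (Dom C a) \<in> src_block X \<sigma>" "Idm C (Cod C a) \<in> tgt_block X \<sigma>"
    using src_block_eq[OF s a] tgt_block_eq[OF s a] unit_block m by simp_all
  then show "Comp (Rtil X) (Rtil_arr X \<sigma>) (Rtil_arr X (src_block X \<sigma>)) = Rtil_arr X \<sigma>"
    "Comp (Rtil X) (Rtil_arr X (tgt_block X \<sigma>)) (Rtil_arr X \<sigma>) = Rtil_arr X \<sigma>"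
    using Rtil_comp_arr[OF blocks(1) s a] Rtil_comp_arr[OF s blocks(2) _ a] block_of_eq'[OF s a] m
      cat
    by simp_all
qed

lemma Rtil_comp_assoc:
  assumes s: "\<sigma>1 \<in> S" "\<sigma>2 \<in> S" "\<sigma>3 \<in> S"
    and e: "tgt_block X \<sigma>1 = src_block X \<sigma>2" "tgt_block X \<sigma>2 = src_block X \<sigma>3"
  shows "Comp (Rtil X) (Rtil_arr X \<sigma>3) (Comp (Rtil X) (Rtil_arr X \<sigma>2) (Rtil_arr X \<sigma>1))
       = Comp (Rtil X) (Comp (Rtil X) (Rtil_arr X \<sigma>3) (Rtil_arr X \<sigma>2)) (Rtil_arr X \<sigma>1)"
proof -
  obtain b c where bc: "b \<in> \<sigma>2" "c \<in> \<sigma>1" "Dom C b = Cod C c"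
    using composable_members[OF s(1,2) e(1)] .
  have y: "Cod C b \<in> Obj C" using bc s block_mor cat by simp
  then have "Idm C (Cod C b) \<in> src_block X \<sigma>3" using tgt_block_eq[OF s(2) bc(1)] e(2) unit_block
    by simp
  then obtain a where a: "a \<in> \<sigma>3" "Dom C a = Cod C b" using block_has_dom[OF s(3) y] by blast
  have m: "a \<in> Mor C" "b \<in> Mor C" "c \<in> Mor C" using a bc s block_mor by auto
  have bcm: "Comp C b c \<in> Mor C" and abm: "Comp C a b \<in> Mor C" using m a bc cat by simp_all
  have "Comp (Rtil X) (Rtil_arr X \<sigma>3) (Comp (Rtil X) (Rtil_arr X \<sigma>2) (Rtil_arr X \<sigma>1))
      = Rtil_arr X (block_of S (Comp C a (Comp C b c)))"
    using Rtil_comp_arr[OF s(1,2) bc]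
      Rtil_comp_arr[OF block_of_block[OF bcm] s(3) a(1) mem_block_of[OF bcm]]
      a m bc cat by simp
  also have "\<dots> = Rtil_arr X (block_of S (Comp C (Comp C a b) c))"
    using cat_assoc[OF cat m(3,2,1) bc(3)[symmetric] a(2)[symmetric]] by simp
  also have "\<dots> = Comp (Rtil X) (Comp (Rtil X) (Rtil_arr X \<sigma>3) (Rtil_arr X \<sigma>2)) (Rtil_arr X \<sigma>1)"
    using Rtil_comp_arr[OF s(2,3) a(1) bc(1) a(2)]
      Rtil_comp_arr[OF s(1) block_of_block[OF abm] mem_block_of[OF abm] bc(2)]
      a m bc cat by simp
  finally show ?thesis .
qed

lemma Rtil_category: "category (Rtil X)"
  unfolding category_def
proof (intro conjI ballI impI)
  fix f assume "f \<in> Mor (Rtil X)"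
  then obtain \<sigma> where \<sigma>: "\<sigma> \<in> S" "f = Rtil_arr X \<sigma>" by (rule Rtil_mor_cases)
  then show "Dom (Rtil X) f \<in> Obj (Rtil X)" "Cod (Rtil X) f \<in> Obj (Rtil X)"
    using src_block_S0 tgt_block_S0 by simp_all
  show "Comp (Rtil X) f (Idm (Rtil X) (Dom (Rtil X) f)) = f"
    "Comp (Rtil X) (Idm (Rtil X) (Cod (Rtil X) f)) f = f"
    using Rtil_comp_units[OF \<sigma>(1)] Rtil_arr_S0[OF src_block_S0[OF \<sigma>(1)]]
      Rtil_arr_S0[OF tgt_block_S0[OF \<sigma>(1)]] \<sigma>(2) by simp_all
next
  fix x assume "x \<in> Obj (Rtil X)"
  then show "Idm (Rtil X) x \<in> Mor (Rtil X)" "Dom (Rtil X) (Idm (Rtil X) x) = x"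
    "Cod (Rtil X) (Idm (Rtil X) x) = x"
    using Rtil_arr_mor[OF S0_block] Rtil_arr_S0 by simp_all
next
  fix f g assume "f \<in> Mor (Rtil X)" "g \<in> Mor (Rtil X)" "Cod (Rtil X) f = Dom (Rtil X) g"
  then show "Comp (Rtil X) g f \<in> Mor (Rtil X)" "Dom (Rtil X) (Comp (Rtil X) g f) = Dom (Rtil X) f"
    "Cod (Rtil X) (Comp (Rtil X) g f) = Cod (Rtil X) g"
    using Rtil_comp_closed by (auto elim!: Rtil_mor_cases)
next
  fix f g h assume "f \<in> Mor (Rtil X)" "g \<in> Mor (Rtil X)" "h \<in> Mor (Rtil X)"
    "Cod (Rtil X) f = Dom (Rtil X) g" "Cod (Rtil X) g = Dom (Rtil X) h"
  then show "Comp (Rtil X) h (Comp (Rtil X) g f) = Comp (Rtil X) (Comp (Rtil X) h g) f"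
    using Rtil_comp_assoc by (auto elim!: Rtil_mor_cases)
qed

lemma Rtil_inverse:
  assumes s: "\<sigma> \<in> S"
  shows "is_inverse (Rtil X) (Rtil_arr X \<sigma>) (Rtil_arr X (ginv C ` \<sigma>))"
proof -
  obtain f where f: "f \<in> \<sigma>" using block_nonempty[OF s] by blast
  have fm: "f \<in> Mor C" using f s block_mor by auto
  have gf: "ginv C f \<in> ginv C ` \<sigma>" using f by simp
  have "Comp (Rtil X) (Rtil_arr X (ginv C ` \<sigma>)) (Rtil_arr X \<sigma>) = Rtil_arr X (src_block X \<sigma>)"
    using Rtil_comp_arr[OF s ginv_block[OF s] gf f] src_block_eq[OF s f] fm gpd by simp
  moreover have
    "Comp (Rtil X) (Rtil_arr X \<sigma>) (Rtil_arr X (ginv C ` \<sigma>)) = Rtil_arr X (tgt_block X \<sigma>)"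
    using Rtil_comp_arr[OF ginv_block[OF s] s f gf] tgt_block_eq[OF s f] fm gpd by simp
  ultimately show ?thesis
    unfolding is_inverse_def using Rtil_arr_mor[OF ginv_block[OF s]] src_tgt_block_ginv[OF s]
      Rtil_arr_S0[OF src_block_S0[OF s]] Rtil_arr_S0[OF tgt_block_S0[OF s]] by simp
qed

lemma Rtil_groupoid: "groupoid (Rtil X)"
  unfolding groupoid_def using Rtil_category Rtil_inverse by (blast elim: Rtil_mor_cases)

lemma Rtil_ginv: "\<sigma> \<in> S \<Longrightarrow> ginv (Rtil X) (Rtil_arr X \<sigma>) = Rtil_arr X (ginv C ` \<sigma>)"
  by (rule ginv_eq[OF Rtil_groupoid Rtil_arr_mor Rtil_inverse])

end

section \<open>The functor R~\<close>

definition block_image :: "('p,'n) schemoid \<Rightarrow> ('o \<Rightarrow> 'p) \<times> ('m \<Rightarrow> 'n) \<Rightarrow> 'm set \<Rightarrow> 'n set" where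
  "block_image Y F \<sigma> = (THE \<tau>. \<tau> \<in> Blocks Y \<and> snd F ` \<sigma> \<subseteq> \<tau>)"

lemma Rtil_fun_eq: "Rtil_fun X Y F = (restrict (block_image Y F) (S0 X),
   restrict (\<lambda>(\<alpha>, \<sigma>, \<beta>). (block_image Y F \<alpha>, block_image Y F \<sigma>, block_image Y F \<beta>)) (Mor (Rtil X)))"
  unfolding Rtil_fun_def block_image_def Let_def by simp

lemma block_image_eq_block_of:
  assumes Y: "thin_smd Y" and ex: "\<exists>\<tau>\<in>Blocks Y. snd F ` \<sigma> \<subseteq> \<tau>" and f: "f \<in> \<sigma>"
  shows "block_image Y F \<sigma> = block_of (Blocks Y) (snd F f)"
proof -
  interpret Y: thin_schemoid Y by (rule thin_schemoid.intro) (rule Y)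
  obtain \<tau> where \<tau>: "\<tau> \<in> Blocks Y" "snd F ` \<sigma> \<subseteq> \<tau>" using ex by blast
  then have "block_image Y F \<sigma> = \<tau>"
    unfolding block_image_def using Y.block_unique f by (intro the_equality) blast+
  then show ?thesis using Y.block_of_eq' \<tau> f by blast
qed

locale thin_morphism = X: thin_schemoid X + Y: thin_schemoid Y
  for X :: "('o,'m) schemoid" and Y :: "('p,'n) schemoid" +
  fixes F assumes morph: "smd_morph X Y F"
begin

lemma F_functor: "is_functor (Cat X) (Cat Y) F" using morph unfolding smd_morph_def by blast

lemma block_image_eq:
  assumes s: "\<sigma> \<in> Blocks X" and f: "f \<in> \<sigma>"
  shows "block_image Y F \<sigma> = block_of (Blocks Y) (snd F f)"
proof -
  have "\<exists>\<tau>\<in>Blocks Y. snd F ` \<sigma> \<subseteq> \<tau>" using morph s unfolding smd_morph_def by blast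
  then show ?thesis by (rule block_image_eq_block_of[OF Y.thin _ f])
qed

lemma block_image_block: "\<sigma> \<in> Blocks X \<Longrightarrow> block_image Y F \<sigma> \<in> Blocks Y"
  using block_image_eq X.block_nonempty Y.block_of_block X.block_mor is_functorD(6)[OF F_functor]
  by (metis ex_in_conv)

lemma mem_block_image: "\<sigma> \<in> Blocks X \<Longrightarrow> f \<in> \<sigma> \<Longrightarrow> snd F f \<in> block_image Y F \<sigma>"
  using block_image_eq Y.mem_block_of X.block_mor is_functorD(6)[OF F_functor] by metis

lemma block_image_unit:
  assumes x: "x \<in> Obj (Cat X)"
  shows "block_image Y F (block_of (Blocks X) (Idm (Cat X) x))
    = block_of (Blocks Y) (Idm (Cat Y) (fst F x))"
  using block_image_eq[OF X.unit_block[OF x]]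
    is_functorD(9)[OF F_functor x] by simp

lemma block_image_S0: "\<alpha> \<in> S0 X \<Longrightarrow> block_image Y F \<alpha> \<in> S0 Y"
  using X.S0_unit_block block_image_unit Y.unit_block_S0 is_functorD(5)[OF F_functor] by metis

lemma src_tgt_block_image:
  assumes s: "\<sigma> \<in> Blocks X"
  shows "src_block Y (block_image Y F \<sigma>) = block_image Y F (src_block X \<sigma>)"
    "tgt_block Y (block_image Y F \<sigma>) = block_image Y F (tgt_block X \<sigma>)"
proof -
  obtain f where f: "f \<in> \<sigma>" using X.block_nonempty[OF s] by blast
  have fm: "f \<in> Mor (Cat X)" using f s X.block_mor by blast
  show "src_block Y (block_image Y F \<sigma>) = block_image Y F (src_block X \<sigma>)"
    using Y.src_block_eq[OF block_image_block[OF s] mem_block_image[OF s f]] X.src_block_eq[OF s f]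
      block_image_unit is_functorD(7)[OF F_functor fm] fm X.cat by simp
  show "tgt_block Y (block_image Y F \<sigma>) = block_image Y F (tgt_block X \<sigma>)"
    using Y.tgt_block_eq[OF block_image_block[OF s] mem_block_image[OF s f]] X.tgt_block_eq[OF s f]
      block_image_unit is_functorD(8)[OF F_functor fm] fm X.cat by simp
qed

lemma Rtil_fun_arr:
  "\<sigma> \<in> Blocks X \<Longrightarrow> snd (Rtil_fun X Y F) (Rtil_arr X \<sigma>) = Rtil_arr Y (block_image Y F \<sigma>)"
  unfolding Rtil_fun_eq using X.Rtil_arr_mor src_tgt_block_image by (simp add: Rtil_arr_def)

lemma Rtil_fun_comp:
  assumes f: "f \<in> Mor (Rtil X)" and g: "g \<in> Mor (Rtil X)" and fg: "Cod (Rtil X) f = Dom (Rtil X) g"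
  shows "snd (Rtil_fun X Y F) (Comp (Rtil X) g f)
      = Comp (Rtil Y) (snd (Rtil_fun X Y F) g) (snd (Rtil_fun X Y F) f)"
proof -
  obtain \<sigma> \<tau> where st: "\<sigma> \<in> Blocks X" "\<tau> \<in> Blocks X" "f = Rtil_arr X \<sigma>" "g = Rtil_arr X \<tau>"
    using f g X.Rtil_mor_cases by metis
  then have "tgt_block X \<sigma> = src_block X \<tau>" using fg by simp
  then obtain a b where ab: "a \<in> \<tau>" "b \<in> \<sigma>" "Dom (Cat X) a = Cod (Cat X) b"
    by (rule X.composable_members[OF st(1,2)])
  have m: "a \<in> Mor (Cat X)" "b \<in> Mor (Cat X)" "Comp (Cat X) a b \<in> Mor (Cat X)"
    using ab st X.block_mor X.cat by auto
  have "snd (Rtil_fun X Y F) (Comp (Rtil X) g f)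
      = Rtil_arr Y (block_of (Blocks Y) (snd F (Comp (Cat X) a b)))"
    using X.Rtil_comp_arr[OF st(1,2) ab] st Rtil_fun_arr[OF X.block_of_block[OF m(3)]]
      block_image_eq[OF X.block_of_block X.mem_block_of, OF m(3) m(3)] by simp
  also have "\<dots> = Rtil_arr Y (block_of (Blocks Y) (Comp (Cat Y) (snd F a) (snd F b)))"
    using is_functorD(10)[OF F_functor] m ab by simp
  also have "\<dots> = Comp (Rtil Y) (snd (Rtil_fun X Y F) g) (snd (Rtil_fun X Y F) f)"
    using Y.Rtil_comp_arr[OF block_image_block[OF st(1)] block_image_block[OF st(2)]
        mem_block_image[OF st(2) ab(1)] mem_block_image[OF st(1) ab(2)]]
      is_functorD(7,8)[OF F_functor] m ab Rtil_fun_arr st by simp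
  finally show ?thesis .
qed

lemma Rtil_fun_is_functor: "is_functor (Rtil X) (Rtil Y) (Rtil_fun X Y F)"
  unfolding is_functor_def
proof (intro conjI ballI impI X.Rtil_category Y.Rtil_category)
  show "fst (Rtil_fun X Y F) \<in> extensional (Obj (Rtil X))"
    "snd (Rtil_fun X Y F) \<in> extensional (Mor (Rtil X))"
    unfolding Rtil_fun_eq by simp_all
  fix \<alpha> assume "\<alpha> \<in> Obj (Rtil X)"
  then have \<alpha>: "\<alpha> \<in> S0 X" "fst (Rtil_fun X Y F) \<alpha> = block_image Y F \<alpha>"
    unfolding Rtil_fun_eq by simp_all
  then show "fst (Rtil_fun X Y F) \<alpha> \<in> Obj (Rtil Y)" using block_image_S0 by simp
  have "snd (Rtil_fun X Y F) (Idm (Rtil X) \<alpha>) = Rtil_arr Y (block_image Y F \<alpha>)"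
    using Rtil_fun_arr[OF X.S0_block[OF \<alpha>(1)]] X.Rtil_arr_S0[OF \<alpha>(1)] by simp
  then show "snd (Rtil_fun X Y F) (Idm (Rtil X) \<alpha>) = Idm (Rtil Y) (fst (Rtil_fun X Y F) \<alpha>)"
    using Y.Rtil_arr_S0[OF block_image_S0[OF \<alpha>(1)]] \<alpha>(2) by simp
next
  fix t assume "t \<in> Mor (Rtil X)"
  then obtain \<sigma> where "\<sigma> \<in> Blocks X" "t = Rtil_arr X \<sigma>" by (rule X.Rtil_mor_cases)
  then show "snd (Rtil_fun X Y F) t \<in> Mor (Rtil Y)"
    "Dom (Rtil Y) (snd (Rtil_fun X Y F) t) = fst (Rtil_fun X Y F) (Dom (Rtil X) t)"
    "Cod (Rtil Y) (snd (Rtil_fun X Y F) t) = fst (Rtil_fun X Y F) (Cod (Rtil X) t)"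
    using Rtil_fun_arr Y.Rtil_arr_mor block_image_block src_tgt_block_image
      X.src_block_S0 X.tgt_block_S0 by (simp_all add: Rtil_fun_eq)
next
  fix f g assume "f \<in> Mor (Rtil X)" "g \<in> Mor (Rtil X)" "Cod (Rtil X) f = Dom (Rtil X) g"
  then show "snd (Rtil_fun X Y F) (Comp (Rtil X) g f)
      = Comp (Rtil Y) (snd (Rtil_fun X Y F) g) (snd (Rtil_fun X Y F) f)"
    by (rule Rtil_fun_comp)
qed

end

lemma thin_morphismI:
  "thin_smd X \<Longrightarrow> thin_smd Y \<Longrightarrow> smd_morph X Y F \<Longrightarrow> thin_morphism X Y F"
  by (intro thin_morphism.intro thin_morphism_axioms.intro thin_schemoid.intro)

lemma Rtil_fun_in_gpd_hom:
  "thin_smd X \<Longrightarrow> thin_smd Y \<Longrightarrow> F \<in> smd_hom X Y \<Longrightarrow> Rtil_fun X Y F \<in> gpd_hom (Rtil X) (Rtil Y)"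
  unfolding smd_hom_def gpd_hom_def using thin_morphism.Rtil_fun_is_functor thin_morphismI by blast


lemma block_image_fid:
  assumes X: "thin_smd X" and s: "\<sigma> \<in> Blocks X"
  shows "block_image X (fid (Cat X)) \<sigma> = \<sigma>"
proof -
  interpret X: thin_schemoid X by (rule thin_schemoid.intro) (rule X)
  obtain f where f: "f \<in> \<sigma>" using X.block_nonempty[OF s] by blast
  have "snd (fid (Cat X)) ` \<sigma> \<subseteq> \<sigma>" using X.block_mor[OF s] unfolding fid_def by auto
  then show ?thesis
    using block_image_eq_block_of[OF X, of "fid (Cat X)" \<sigma> f] s f X.block_of_eq'[OF s f]
      X.block_mor[OF s f]
    unfolding fid_def by auto
qed

lemma Rtil_fun_fid:
  assumes X: "thin_smd X"
  shows "Rtil_fun X X (fid (Cat X)) = fid (Rtil X)"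
proof -
  interpret X: thin_schemoid X by (rule thin_schemoid.intro) (rule X)
  note id = block_image_fid[OF X]
  have "restrict (\<lambda>(\<alpha>, \<sigma>, \<beta>). (block_image X (fid (Cat X)) \<alpha>, block_image X (fid (Cat X)) \<sigma>,
      block_image X (fid (Cat X)) \<beta>)) (Mor (Rtil X)) = restrict id (Mor (Rtil X))"
  proof (rule restrict_ext)
    fix t assume "t \<in> Mor (Rtil X)"
    then show "(\<lambda>(\<alpha>, \<sigma>, \<beta>). (block_image X (fid (Cat X)) \<alpha>, block_image X (fid (Cat X)) \<sigma>,
      block_image X (fid (Cat X)) \<beta>)) t = id t"
      using id X.S0_block X.src_block_S0 X.tgt_block_S0
      by (cases rule: X.Rtil_mor_cases) (simp add: Rtil_arr_def)
  qed
  moreover have "restrict (block_image X (fid (Cat X))) (S0 X) = restrict id (S0 X)"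
    using id X.S0_block by (intro restrict_ext) simp
  ultimately show ?thesis unfolding Rtil_fun_eq fid_def[of "Rtil X"] by simp
qed

lemma block_image_fcomp:
  assumes X: "thin_smd X" and Y: "thin_smd Y" and Z: "thin_smd Z"
    and F: "smd_morph X Y F" and G: "smd_morph Y Z G" and s: "\<sigma> \<in> Blocks X"
  shows "block_image Z (fcomp (Cat X) G F) \<sigma> = block_image Z G (block_image Y F \<sigma>)"
proof -
  interpret XY: thin_morphism X Y F by (rule thin_morphismI[OF X Y F])
  interpret YZ: thin_morphism Y Z G by (rule thin_morphismI[OF Y Z G])
  obtain f where f: "f \<in> \<sigma>" using XY.X.block_nonempty[OF s] by blast
  have Fs: "block_image Y F \<sigma> \<in> Blocks Y" by (rule XY.block_image_block[OF s])
  have "snd (fcomp (Cat X) G F) ` \<sigma> \<subseteq> block_image Z G (block_image Y F \<sigma>)"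
    using YZ.mem_block_image[OF Fs XY.mem_block_image[OF s]] XY.X.block_mor[OF s]
    unfolding fcomp_def by auto
  then show ?thesis
    using block_image_eq_block_of[OF Z, of "fcomp (Cat X) G F" \<sigma> f] YZ.block_image_block[OF Fs]
      YZ.block_image_eq[OF Fs XY.mem_block_image[OF s f]] f XY.X.block_mor[OF s f]
    unfolding fcomp_def by auto
qed

lemma Rtil_fun_fcomp:
  assumes X: "thin_smd X" and Y: "thin_smd Y" and Z: "thin_smd Z"
    and F: "smd_morph X Y F" and G: "smd_morph Y Z G"
  shows "Rtil_fun X Z (fcomp (Cat X) G F) = fcomp (Rtil X) (Rtil_fun Y Z G) (Rtil_fun X Y F)"
proof -
  interpret XY: thin_morphism X Y F by (rule thin_morphismI[OF X Y F])
  interpret YZ: thin_morphism Y Z G by (rule thin_morphismI[OF Y Z G])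
  let ?GF = "block_image Z (fcomp (Cat X) G F)"
  note comp = block_image_fcomp[OF X Y Z F G]
  have "restrict (\<lambda>(\<alpha>, \<sigma>, \<beta>). (?GF \<alpha>, ?GF \<sigma>, ?GF \<beta>)) (Mor (Rtil X))
      = restrict (snd (Rtil_fun Y Z G) \<circ> snd (Rtil_fun X Y F)) (Mor (Rtil X))"
  proof (rule restrict_ext)
    fix t assume "t \<in> Mor (Rtil X)"
    then obtain \<sigma> where \<sigma>: "\<sigma> \<in> Blocks X" "t = Rtil_arr X \<sigma>" by (rule XY.X.Rtil_mor_cases)
    have "snd (Rtil_fun Y Z G) (snd (Rtil_fun X Y F) t)
        = Rtil_arr Z (block_image Z G (block_image Y F \<sigma>))"
      using \<sigma> XY.Rtil_fun_arr YZ.Rtil_fun_arr XY.block_image_block by simp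
    then show "(\<lambda>(\<alpha>, \<sigma>, \<beta>). (?GF \<alpha>, ?GF \<sigma>, ?GF \<beta>)) t
      = (snd (Rtil_fun Y Z G) \<circ> snd (Rtil_fun X Y F)) t"
      using \<sigma> comp XY.X.S0_block XY.X.src_block_S0 XY.X.tgt_block_S0 XY.block_image_block
        YZ.src_tgt_block_image XY.src_tgt_block_image
      by (simp add: Rtil_arr_def)
  qed
  moreover have
    "restrict ?GF (S0 X) = restrict (fst (Rtil_fun Y Z G) \<circ> fst (Rtil_fun X Y F)) (S0 X)"
    using comp XY.X.S0_block XY.block_image_S0 by (intro restrict_ext) (simp add: Rtil_fun_eq)
  ultimately show ?thesis unfolding Rtil_fun_eq[of X Z] fcomp_def[of "Rtil X"] by simp
qed

section \<open>The adjunction\<close>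

definition transpose :: "('o,'m) cat \<Rightarrow> ('p,'n) schemoid \<Rightarrow> ('m \<Rightarrow> 'p) \<times> ('m \<times> 'm \<Rightarrow> 'n)
     \<Rightarrow> ('o \<Rightarrow> 'n set) \<times> ('m \<Rightarrow> 'n set \<times> 'n set \<times> 'n set)" where
  "transpose H X k =
    (restrict (\<lambda>x. block_of (Blocks X) (snd k (Idm H x, Idm H x))) (Obj H),
     restrict (\<lambda>f. Rtil_arr X (block_of (Blocks X) (snd k (Idm H (Cod H f), f)))) (Mor H))"

definition the_hom :: "('o,'m) cat \<Rightarrow> 'o \<Rightarrow> 'o \<Rightarrow> 'm" where
  "the_hom C x y = (THE m. m \<in> Mor C \<and> Dom C m = x \<and> Cod C m = y)"

context thin_schemoid
begin

lemma the_hom_eq: "m \<in> Mor C \<Longrightarrow> Dom C m = x \<Longrightarrow> Cod C m = y \<Longrightarrow> the_hom C x y = m"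
  unfolding the_hom_def by (rule the_equality) (auto intro: hom_unique)

lemma the_hom_idm: "x \<in> Obj C \<Longrightarrow> the_hom C x x = Idm C x"
  using the_hom_eq[of "Idm C x" x x] cat by simp

end

locale thin_gpd = thin_schemoid X for X :: "('p,'n) schemoid" +
  fixes H :: "('o,'m) cat"
  assumes gpd_H: "groupoid H"
begin

lemma cat_H: "category H" using gpd_H by blast

end

locale from_Stil = thin_gpd X H for X :: "('p,'n) schemoid" and H :: "('o,'m) cat" +
  fixes k assumes k_morph: "smd_morph (Stil H) X k"
begin

lemma k_functor: "is_functor (Stil_cat H) C k" using k_morph unfolding smd_morph_def by simp

lemma k_mor:
  "h \<in> Mor H \<Longrightarrow> g \<in> Mor H \<Longrightarrow> Cod H h = Cod H g \<Longrightarrow>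
    snd k (h, g) \<in> Mor C \<and> Dom C (snd k (h, g)) = fst k g \<and> Cod C (snd k (h, g)) = fst k h"
  using is_functorD(6,7,8)[OF k_functor, of "(h, g)"] by simp

lemma k_idm: "g \<in> Mor H \<Longrightarrow> snd k (g, g) = Idm C (fst k g)"
  using is_functorD(9)[OF k_functor, of g] by simp

lemma k_comp:
  "a \<in> Mor H \<Longrightarrow> b \<in> Mor H \<Longrightarrow> c \<in> Mor H \<Longrightarrow> Cod H a = Cod H b \<Longrightarrow> Cod H b = Cod H c \<Longrightarrow>
    snd k (a, c) = Comp C (snd k (a, b)) (snd k (b, c))"
  using is_functorD(10)[OF k_functor, of "(b, c)" "(a, b)"] by simp

lemma k_base: "y \<in> Obj H \<Longrightarrow> fst k (Idm H y) \<in> Base X"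
  using k_morph unfolding smd_morph_def by auto

lemma k_block_of_eq:
  assumes f: "f \<in> Mor H" and p: "p \<in> Stil_block H f" and q: "q \<in> Stil_block H f"
  shows "block_of S (snd k p) = block_of S (snd k q)"
proof -
  obtain \<tau> where "\<tau> \<in> S" "snd k ` Stil_block H f \<subseteq> \<tau>" using k_morph f unfolding smd_morph_def
    by auto
  then show ?thesis using block_of_eq' p q by blast
qed

lemma transpose_obj: "x \<in> Obj H \<Longrightarrow> block_of S (snd k (Idm H x, Idm H x)) \<in> S0 X"
  using k_idm[of "Idm H x"] is_functorD(5)[OF k_functor, of "Idm H x"] unit_block_S0 cat_H by simp

lemma transpose_block:
  assumes f: "f \<in> Mor H"
  defines "\<sigma> \<equiv> block_of S (snd k (Idm H (Cod H f), f))"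
  shows "\<sigma> \<in> S" "snd k (Idm H (Cod H f), f) \<in> \<sigma>"
    "src_block X \<sigma> = block_of S (snd k (Idm H (Dom H f), Idm H (Dom H f)))"
    "tgt_block X \<sigma> = block_of S (snd k (Idm H (Cod H f), Idm H (Cod H f)))"
proof -
  have m: "snd k (Idm H (Cod H f), f) \<in> Mor C" "Dom C (snd k (Idm H (Cod H f), f)) = fst k f"
    "Cod C (snd k (Idm H (Cod H f), f)) = fst k (Idm H (Cod H f))"
    using k_mor[of "Idm H (Cod H f)" f] f cat_H by auto
  then show \<sigma>: "\<sigma> \<in> S" "snd k (Idm H (Cod H f), f) \<in> \<sigma>"
    unfolding \<sigma>_def using block_of_block mem_block_of by auto
  have "src_block X \<sigma> = block_of S (snd k (f, f))" using src_block_eq[OF \<sigma>] m k_idm f by simp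
  also have "\<dots> = block_of S (snd k (Idm H (Dom H f), Idm H (Dom H f)))"
    using k_block_of_eq[of "Idm H (Dom H f)" "(f, f)"] f cat_H Stil_block_idm_iff[OF gpd_H] by simp
  finally show "src_block X \<sigma> = block_of S (snd k (Idm H (Dom H f), Idm H (Dom H f)))" .
  show "tgt_block X \<sigma> = block_of S (snd k (Idm H (Cod H f), Idm H (Cod H f)))"
    using tgt_block_eq[OF \<sigma>] m k_idm f cat_H by simp
qed

lemma transpose_comp:
  assumes f: "f \<in> Mor H" and g: "g \<in> Mor H" and fg: "Cod H f = Dom H g"
  shows "snd (transpose H X k) (Comp H g f)
      = Comp (Rtil X) (snd (transpose H X k) g) (snd (transpose H X k) f)"
proof -
  have gf: "Comp H g f \<in> Mor H" "Cod H (Comp H g f) = Cod H g" using f g fg cat_H by auto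
  have "(g, Comp H g f) \<in> Stil_block H f" using Stil_block_iff[OF gpd_H f] g fg by simp
  then have b: "snd k (g, Comp H g f) \<in> block_of S (snd k (Idm H (Cod H f), f))"
    using k_block_of_eq[OF f _ Stil_idm_in_block[OF gpd_H f]] mem_block_of k_mor[of g "Comp H g f"]
      g gf
    by metis
  have "snd k (Idm H (Cod H g), Comp H g f)
      = Comp C (snd k (Idm H (Cod H g), g)) (snd k (g, Comp H g f))"
    by (rule k_comp) (use g gf cat_H in auto)
  moreover have "Dom C (snd k (Idm H (Cod H g), g)) = Cod C (snd k (g, Comp H g f))"
    using k_mor[of "Idm H (Cod H g)" g] k_mor[of g "Comp H g f"] g gf cat_H by simp
  ultimately show ?thesis
    unfolding transpose_def
    using Rtil_comp_arr[OF transpose_block(1)[OF f] transpose_block(1)[OF g]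
        transpose_block(2)[OF g] b] f g gf
    by simp
qed

lemma transpose_is_functor: "is_functor H (Rtil X) (transpose H X k)"
  unfolding is_functor_def
proof (intro conjI ballI impI cat_H Rtil_category)
  show "fst (transpose H X k) \<in> extensional (Obj H)" "snd (transpose H X k) \<in> extensional (Mor H)"
    unfolding transpose_def by simp_all
  fix x assume x: "x \<in> Obj H"
  then show "fst (transpose H X k) x \<in> Obj (Rtil X)" unfolding transpose_def using transpose_obj
    by simp
  show "snd (transpose H X k) (Idm H x) = Idm (Rtil X) (fst (transpose H X k) x)"
    unfolding transpose_def using x cat_H Rtil_arr_S0[OF transpose_obj[OF x]] by simp
next
  fix f assume f: "f \<in> Mor H"
  then show "snd (transpose H X k) f \<in> Mor (Rtil X)"
    "Dom (Rtil X) (snd (transpose H X k) f) = fst (transpose H X k) (Dom H f)"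
    "Cod (Rtil X) (snd (transpose H X k) f) = fst (transpose H X k) (Cod H f)"
    unfolding transpose_def using Rtil_arr_mor transpose_block[OF f] cat_H by simp_all
next
  fix f g assume "f \<in> Mor H" "g \<in> Mor H" "Cod H f = Dom H g"
  then show "snd (transpose H X k) (Comp H g f)
      = Comp (Rtil X) (snd (transpose H X k) g) (snd (transpose H X k) f)"
    by (rule transpose_comp)
qed

end

lemma (in thin_gpd) from_StilI: "smd_morph (Stil H) X k \<Longrightarrow> from_Stil X H k"
  by (intro from_Stil.intro from_Stil_axioms.intro thin_gpd_axioms)

text \<open>Injectivity: the transpose records, for every \<open>g\<close>, the block of \<open>k(1, g)\<close>; since the base
  point \<open>k(1)\<close> is recovered from its block, \<open>k(1, g)\<close> itself is determined (blocks are thin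
  over codomains), and then so is all of \<open>k\<close> (hom-sets of \<open>X\<close> have at most one element).\<close>

lemma (in thin_gpd) transpose_inj:
  assumes k: "smd_morph (Stil H) X k" and k': "smd_morph (Stil H) X k'"
    and eq: "transpose H X k = transpose H X k'"
  shows "k = k'"
proof -
  interpret A: from_Stil X H k by (rule from_StilI[OF k])
  interpret B: from_Stil X H k' by (rule from_StilI[OF k'])
  have base: "fst k (Idm H y) = fst k' (Idm H y)" if y: "y \<in> Obj H" for y
  proof -
    have "block_of S (snd k (Idm H y, Idm H y)) = block_of S (snd k' (Idm H y, Idm H y))"
      using arg_cong[OF eq, of "\<lambda>p. fst p y"] y unfolding transpose_def by simp
    then have "block_of S (Idm C (fst k (Idm H y))) = block_of S (Idm C (fst k' (Idm H y)))"
      using A.k_idm B.k_idm y cat_H by simp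
    then show ?thesis
      using unit_block_bij A.k_base[OF y] B.k_base[OF y] unfolding bij_betw_def inj_on_def by blast
  qed
  have obj: "fst k g = fst k' g" if g: "g \<in> Mor H" for g
  proof -
    let ?y = "Cod H g"
    have m: "snd k (Idm H ?y, g) \<in> Mor C" "Dom C (snd k (Idm H ?y, g)) = fst k g"
        "Cod C (snd k (Idm H ?y, g)) = fst k (Idm H ?y)"
      and m': "snd k' (Idm H ?y, g) \<in> Mor C" "Dom C (snd k' (Idm H ?y, g)) = fst k' g"
        "Cod C (snd k' (Idm H ?y, g)) = fst k' (Idm H ?y)"
      using A.k_mor[of "Idm H ?y" g] B.k_mor[of "Idm H ?y" g] g cat_H by auto
    have "block_of S (snd k (Idm H ?y, g)) = block_of S (snd k' (Idm H ?y, g))"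
      using arg_cong[OF eq, of "\<lambda>p. snd p g"] g unfolding transpose_def by (simp add: Rtil_arr_inj)
    then have "snd k (Idm H ?y, g) \<in> block_of S (snd k' (Idm H ?y, g))" using mem_block_of[OF m(1)]
      by simp
    then have "snd k (Idm H ?y, g) = snd k' (Idm H ?y, g)"
      using block_cod_inj[OF block_of_block[OF m'(1)] _ mem_block_of[OF m'(1)]] m(3) m'(3) base g
        cat_H
      by simp
    then show ?thesis using m(2) m'(2) by simp
  qed
  show ?thesis
  proof (rule functor_eqI[OF A.k_functor B.k_functor])
    show "fst k g = fst k' g" if "g \<in> Obj (Stil_cat H)" for g using that obj by simp
    show "snd k p = snd k' p" if "p \<in> Mor (Stil_cat H)" for p
      using that A.k_mor B.k_mor obj hom_unique by (auto simp: Stil_cat_simps)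
  qed
qed

text \<open>Given \<open>P : H \<rightarrow> R~(X)\<close>, send \<open>g \<in> Mor H\<close> to the domain of
  the unique member \<open>lift g\<close> of the block \<open>P g\<close> whose codomain is the base point in the block
  \<open>P (Cod g)\<close>, and a pair \<open>(h, g)\<close> to the unique morphism between the images of \<open>g\<close> and \<open>h\<close>.\<close>

locale to_Rtil = thin_gpd X H for X :: "('p,'n) schemoid" and H :: "('o,'m) cat" +
  fixes P assumes P_functor: "is_functor H (Rtil X) P"
begin

definition arr_block :: "'m \<Rightarrow> 'n set" where
  "arr_block f = fst (snd (snd P f))"

definition base_of :: "'o \<Rightarrow> 'p" where
  "base_of y = the_inv_into (Base X) (\<lambda>v. block_of S (Idm C v)) (fst P y)"

definition lift :: "'m \<Rightarrow> 'n" where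
  "lift f = (THE m. m \<in> arr_block f \<and> Cod C m = base_of (Cod H f))"

definition lift_obj :: "'m \<Rightarrow> 'p" where
  "lift_obj g = Dom C (lift g)"

definition untranspose :: "('m \<Rightarrow> 'p) \<times> ('m \<times> 'm \<Rightarrow> 'n)" where
  "untranspose = (restrict lift_obj (Mor H),
     restrict (\<lambda>(h, g). the_hom C (lift_obj g) (lift_obj h)) (Mor (Stil_cat H)))"

lemma P_arr:
  assumes f: "f \<in> Mor H"
  shows "snd P f = Rtil_arr X (arr_block f)" "arr_block f \<in> S"
    "src_block X (arr_block f) = fst P (Dom H f)" "tgt_block X (arr_block f) = fst P (Cod H f)"
proof -
  obtain \<sigma> where "\<sigma> \<in> S" "snd P f = Rtil_arr X \<sigma>"
    using is_functorD(6)[OF P_functor f] by (rule Rtil_mor_cases)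
  moreover from this have "arr_block f = \<sigma>" unfolding arr_block_def by simp
  ultimately show "snd P f = Rtil_arr X (arr_block f)" "arr_block f \<in> S"
    "src_block X (arr_block f) = fst P (Dom H f)" "tgt_block X (arr_block f) = fst P (Cod H f)"
    using is_functorD(7,8)[OF P_functor f] by simp_all
qed

lemma arr_block_idm: "y \<in> Obj H \<Longrightarrow> arr_block (Idm H y) = fst P y"
  using is_functorD(9)[OF P_functor] unfolding arr_block_def by simp

lemma arr_block_comp:
  assumes f: "f \<in> Mor H" and g: "g \<in> Mor H" and fg: "Cod H f = Dom H g"
    and a: "a \<in> arr_block g" and b: "b \<in> arr_block f" and ab: "Dom C a = Cod C b"
  shows "arr_block (Comp H g f) = block_of S (Comp C a b)"
proof -
  have "Rtil_arr X (arr_block (Comp H g f)) = Comp (Rtil X) (snd P g) (snd P f)"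
    using P_arr(1) is_functorD(10)[OF P_functor f g fg] f g fg cat_H by simp
  also have "\<dots> = Rtil_arr X (block_of S (Comp C a b))"
    using Rtil_comp_arr[OF P_arr(2)[OF f] P_arr(2)[OF g] a b ab] P_arr(1) f g by simp
  finally show ?thesis by (rule Rtil_arr_inj)
qed

lemma base_of:
  assumes y: "y \<in> Obj H"
  shows "base_of y \<in> Base X" "block_of S (Idm C (base_of y)) = fst P y" "base_of y \<in> Obj C"
proof -
  have "fst P y \<in> (\<lambda>v. block_of S (Idm C v)) ` Base X"
    using is_functorD(5)[OF P_functor y] unit_block_bij unfolding bij_betw_def by simp
  then show "base_of y \<in> Base X" "block_of S (Idm C (base_of y)) = fst P y"
    unfolding base_of_def using unit_block_bij the_inv_into_into f_the_inv_into_f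
    unfolding bij_betw_def by (metis order_refl)+
  then show "base_of y \<in> Obj C" using Base_subset by blast
qed

lemma lift:
  assumes f: "f \<in> Mor H"
  shows "lift f \<in> arr_block f" "Cod C (lift f) = base_of (Cod H f)" "lift f \<in> Mor C"
proof -
  have y: "Cod H f \<in> Obj H" using f cat_H by simp
  have "Idm C (base_of (Cod H f)) \<in> tgt_block X (arr_block f)"
    using P_arr(4)[OF f] base_of[OF y] unit_block[OF base_of(3)[OF y]] by simp
  then obtain m where m: "m \<in> arr_block f" "Cod C m = base_of (Cod H f)"
    using block_has_cod[OF P_arr(2)[OF f] base_of(3)[OF y]] by blast
  moreover have "m' = m" if "m' \<in> arr_block f \<and> Cod C m' = base_of (Cod H f)" for m'
    using block_cod_inj[OF P_arr(2)[OF f] _ m(1)] that m(2) by simp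
  ultimately have "\<exists>!m. m \<in> arr_block f \<and> Cod C m = base_of (Cod H f)" by blast
  then have "lift f \<in> arr_block f \<and> Cod C (lift f) = base_of (Cod H f)"
    unfolding lift_def by (rule theI')
  then show "lift f \<in> arr_block f" "Cod C (lift f) = base_of (Cod H f)" "lift f \<in> Mor C"
    using block_mor[OF P_arr(2)[OF f]] by simp_all
qed

lemma lift_obj: "g \<in> Mor H \<Longrightarrow> lift_obj g \<in> Obj C"
  unfolding lift_obj_def using lift(3) cat by simp

lemma lift_obj_idm:
  assumes y: "y \<in> Obj H" shows "lift_obj (Idm H y) = base_of y"
proof -
  have iy: "Idm H y \<in> Mor H" using y cat_H by simp
  have "lift (Idm H y) \<in> J0 X"
    using lift(1)[OF iy] arr_block_idm[OF y] S0_J0 is_functorD(5)[OF P_functor y]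
    by auto
  then obtain z where "z \<in> Obj C" "lift (Idm H y) = Idm C z" using mem_J0_iff by blast
  then show ?thesis unfolding lift_obj_def using lift(2)[OF iy] y cat_H cat by simp
qed

lemma the_hom_lift_obj:
  assumes h: "h \<in> Mor H" and g: "g \<in> Mor H" and e: "Cod H h = Cod H g"
  shows "the_hom C (lift_obj g) (lift_obj h) = Comp C (ginv C (lift h)) (lift g)"
    "the_hom C (lift_obj g) (lift_obj h) \<in> Mor C"
    "Dom C (the_hom C (lift_obj g) (lift_obj h)) = lift_obj g"
    "Cod C (the_hom C (lift_obj g) (lift_obj h)) = lift_obj h"
proof -
  have "Cod C (lift g) = Dom C (ginv C (lift h))" using lift[OF h] lift[OF g] e gpd by simp
  then have m: "Comp C (ginv C (lift h)) (lift g) \<in> Mor C"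
    "Dom C (Comp C (ginv C (lift h)) (lift g)) = lift_obj g"
    "Cod C (Comp C (ginv C (lift h)) (lift g)) = lift_obj h"
    unfolding lift_obj_def using lift(3)[OF h] lift(3)[OF g] gpd by simp_all
  then show "the_hom C (lift_obj g) (lift_obj h) = Comp C (ginv C (lift h)) (lift g)"
    by (rule the_hom_eq)
  with m show "the_hom C (lift_obj g) (lift_obj h) \<in> Mor C"
    "Dom C (the_hom C (lift_obj g) (lift_obj h)) = lift_obj g"
    "Cod C (the_hom C (lift_obj g) (lift_obj h)) = lift_obj h" by simp_all
qed

lemma untranspose_is_functor: "is_functor (Stil_cat H) C untranspose"
  unfolding is_functor_def
proof (intro conjI ballI impI cat Stil_category)
  show "fst untranspose \<in> extensional (Obj (Stil_cat H))"
    "snd untranspose \<in> extensional (Mor (Stil_cat H))"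
    unfolding untranspose_def by simp_all
  fix x assume "x \<in> Obj (Stil_cat H)"
  then show "fst untranspose x \<in> Obj C"
    "snd untranspose (Idm (Stil_cat H) x) = Idm C (fst untranspose x)"
    unfolding untranspose_def using lift_obj the_hom_idm by simp_all
next
  fix p assume "p \<in> Mor (Stil_cat H)"
  then show "snd untranspose p \<in> Mor C"
    "Dom C (snd untranspose p) = fst untranspose (Dom (Stil_cat H) p)"
    "Cod C (snd untranspose p) = fst untranspose (Cod (Stil_cat H) p)"
    unfolding untranspose_def using the_hom_lift_obj by auto
next
  fix p q assume p: "p \<in> Mor (Stil_cat H)" and q: "q \<in> Mor (Stil_cat H)"
    and pq: "Cod (Stil_cat H) p = Dom (Stil_cat H) q"
  obtain a b c where abc: "q = (a, b)" "p = (b, c)" using pq by (cases p, cases q) auto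
  have m: "a \<in> Mor H" "b \<in> Mor H" "c \<in> Mor H" "Cod H a = Cod H b" "Cod H b = Cod H c"
    using p q abc by auto
  have "the_hom C (lift_obj c) (lift_obj a)
      = Comp C (the_hom C (lift_obj b) (lift_obj a)) (the_hom C (lift_obj c) (lift_obj b))"
    using the_hom_lift_obj(2-4)[of a b] the_hom_lift_obj(2-4)[of b c] m cat
    by (intro the_hom_eq) simp_all
  then show
    "snd untranspose (Comp (Stil_cat H) q p) = Comp C (snd untranspose q) (snd untranspose p)"
    unfolding untranspose_def using p q abc m by simp
qed

lemma untranspose_block: assumes f: "f \<in> Mor H" shows
  "snd untranspose ` Stil_block H f \<subseteq> arr_block f"
proof
  fix q assume "q \<in> snd untranspose ` Stil_block H f"
  then obtain h where h: "h \<in> Mor H" "Dom H h = Cod H f" "q = snd untranspose (h, Comp H h f)"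
    using Stil_block_iff[OF gpd_H f] by auto
  have hf: "Comp H h f \<in> Mor H" "Cod H (Comp H h f) = Cod H h" using h f cat_H by auto
  have q: "q = the_hom C (lift_obj (Comp H h f)) (lift_obj h)"
    unfolding h(3) untranspose_def using h hf by simp
  have x: "lift_obj h \<in> Obj C" using lift_obj[OF h(1)] .
  have "Idm C (lift_obj h) \<in> tgt_block X (arr_block f)"
    using src_block_eq[OF P_arr(2) lift(1), OF h(1) h(1)] P_arr(3)[OF h(1)] P_arr(4)[OF f] h(2)
      unit_block[OF x] unfolding lift_obj_def by simp
  then obtain b0 where b0: "b0 \<in> arr_block f" "Cod C b0 = lift_obj h"
    using block_has_cod[OF P_arr(2)[OF f] x] by blast
  then have d0: "Dom C (lift h) = Cod C b0" unfolding lift_obj_def by simp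
  have "lift (Comp H h f) \<in> block_of S (Comp C (lift h) b0)"
    using lift(1)[OF hf(1)] arr_block_comp[OF f h(1) h(2)[symmetric] lift(1)[OF h(1)] b0(1) d0]
    by simp
  then obtain a' b' where ab: "a' \<in> arr_block h" "b' \<in> arr_block f" "Dom C a' = Cod C b'"
    "Comp C a' b' = lift (Comp H h f)"
    using block_comp_factor[OF P_arr(2)[OF f] P_arr(2)[OF h(1)] lift(1)[OF h(1)] b0(1) d0] by blast
  have m: "a' \<in> Mor C" "b' \<in> Mor C"
    using block_mor[OF P_arr(2)[OF h(1)] ab(1)] block_mor[OF P_arr(2)[OF f] ab(2)] by simp_all
  have "Cod C a' = Cod C (lift h)"
    using arg_cong[OF ab(4), of "Cod C"] lift(2)[OF hf(1)] lift(2)[OF h(1)] hf m ab(3) cat by simp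
  then have "a' = lift h" using block_cod_inj[OF P_arr(2)[OF h(1)] ab(1) lift(1)[OF h(1)]] by simp
  then have "q = b'"
    using q the_hom_eq[OF m(2)] arg_cong[OF ab(4), of "Dom C"] ab(3) m cat unfolding lift_obj_def
    by simp
  then show "q \<in> arr_block f" using ab(2) by simp
qed

lemma untranspose_smd_morph: "smd_morph (Stil H) X untranspose"
proof -
  have "\<forall>\<sigma>\<in>Blocks (Stil H). \<exists>\<tau>\<in>S. snd untranspose ` \<sigma> \<subseteq> \<tau>"
  proof
    fix \<sigma> assume "\<sigma> \<in> Blocks (Stil H)"
    then obtain f where "f \<in> Mor H" "\<sigma> = Stil_block H f" by auto
    then show "\<exists>\<tau>\<in>S. snd untranspose ` \<sigma> \<subseteq> \<tau>" using untranspose_block P_arr(2) by blast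
  qed
  moreover have
    "\<forall>x\<in>Obj (Cat (Stil H)). fst untranspose (Tob (Stil H) x) = Tob X (fst untranspose x)"
    unfolding untranspose_def using Tob_eq lift_obj by simp
  moreover have
    "\<forall>p\<in>Mor (Cat (Stil H)). snd untranspose (Tmor (Stil H) p) = Tmor X (snd untranspose p)"
  proof
    fix p assume "p \<in> Mor (Cat (Stil H))"
    then obtain h g where hg: "p = (h, g)" "h \<in> Mor H" "g \<in> Mor H" "Cod H h = Cod H g" by auto
    have "the_hom C (lift_obj h) (lift_obj g) = ginv C (the_hom C (lift_obj g) (lift_obj h))"
      using the_hom_lift_obj(2-4)[of h g] hg gpd by (intro the_hom_eq) simp_all
    then show "snd untranspose (Tmor (Stil H) p) = Tmor X (snd untranspose p)"
      unfolding untranspose_def using hg Tmor_eq_ginv the_hom_lift_obj(2) by simp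
  qed
  moreover have "fst untranspose ` Base (Stil H) \<subseteq> Base X"
    unfolding untranspose_def using lift_obj_idm base_of cat_H by auto
  moreover have "is_functor (Cat (Stil H)) C untranspose" using untranspose_is_functor by simp
  ultimately show ?thesis unfolding smd_morph_def by blast
qed

lemma transpose_untranspose: "transpose H X untranspose = P"
proof (rule functor_eqI[OF from_Stil.transpose_is_functor[OF from_StilI] P_functor])
  show "smd_morph (Stil H) X untranspose" by (rule untranspose_smd_morph)
  fix x assume x: "x \<in> Obj H"
  then have "snd untranspose (Idm H x, Idm H x) = Idm C (base_of x)"
    unfolding untranspose_def using cat_H lift_obj_idm the_hom_idm base_of by simp
  then show "fst (transpose H X untranspose) x = fst P x" unfolding transpose_def using x base_of
    by simp
next
  fix f assume f: "f \<in> Mor H"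
  have "snd untranspose (Idm H (Cod H f), f) = the_hom C (lift_obj f) (base_of (Cod H f))"
    unfolding untranspose_def using f cat_H lift_obj_idm by simp
  also have "\<dots> = lift f" using the_hom_eq[OF lift(3)[OF f]] lift(2)[OF f] unfolding lift_obj_def
    by simp
  finally show "snd (transpose H X untranspose) f = snd P f"
    unfolding transpose_def using f P_arr(1) block_of_eq'[OF P_arr(2) lift(1), OF f f] by simp
qed

end

lemma (in thin_gpd) to_RtilI: "is_functor H (Rtil X) P \<Longrightarrow> to_Rtil X H P"
  by (intro to_Rtil.intro to_Rtil_axioms.intro thin_gpd_axioms)

lemma transpose_bij:
  assumes GH: "groupoid H" and X: "thin_smd X"
  shows "bij_betw (transpose H X) (smd_hom (Stil H) X) (gpd_hom H (Rtil X))"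
proof -
  interpret thin_gpd X H by (intro thin_gpd.intro thin_gpd_axioms.intro thin_schemoid.intro X GH)
  show ?thesis
    unfolding bij_betw_def smd_hom_def gpd_hom_def
  proof
    show "inj_on (transpose H X) {k. smd_morph (Stil H) X k}"
      using transpose_inj by (auto intro: inj_onI)
    show "transpose H X ` {k. smd_morph (Stil H) X k} = {P. is_functor H (Rtil X) P}"
    proof (intro equalityI subsetI)
      fix P assume "P \<in> {P. is_functor H (Rtil X) P}"
      then interpret to_Rtil X H P by (intro to_RtilI) simp
      show "P \<in> transpose H X ` {k. smd_morph (Stil H) X k}"
        using untranspose_smd_morph transpose_untranspose by force
    qed (use from_Stil.transpose_is_functor[OF from_StilI] in blast)
  qed
qed

lemma (in from_Stil) block_image_block_of_k:
  assumes G: "thin_morphism X X' G" and p: "p \<in> Mor (Stil_cat H)"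
  shows "block_image X' G (block_of S (snd k p)) = block_of (Blocks X') (snd G (snd k p))"
proof -
  have "snd k p \<in> Mor C" using is_functorD(6)[OF k_functor p] .
  then show ?thesis using thin_morphism.block_image_eq[OF G] block_of_block mem_block_of by simp
qed

lemma transpose_natural:
  assumes GH: "groupoid H" and GH': "groupoid H'" and X: "thin_smd X" and X': "thin_smd X'"
    and F: "is_functor H' H F" and G: "smd_morph X X' G" and k: "smd_morph (Stil H) X k"
  shows "transpose H' X' (fcomp (Cat (Stil H')) G (fcomp (Cat (Stil H')) k (Stil_fun H' F)))
           = fcomp H' (Rtil_fun X X' G) (fcomp H' (transpose H X k) F)"
proof -
  interpret K: from_Stil X H k
    by (intro thin_gpd.from_StilI thin_gpd.intro thin_gpd_axioms.intro thin_schemoid.intro X GH k)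
  interpret M: thin_morphism X X' G by (rule thin_morphismI[OF X X' G])
  let ?K' = "fcomp (Cat (Stil H')) G (fcomp (Cat (Stil H')) k (Stil_fun H' F))"
  have K': "snd ?K' (h, g) = snd G (snd k (snd F h, snd F g))"
    if "(h, g) \<in> Mor (Stil_cat H')" for h g
    unfolding fcomp_def Stil_fun_def using that by simp
  note G_k = K.block_image_block_of_k[OF M.thin_morphism_axioms]
  have "restrict (\<lambda>x. block_of (Blocks X') (snd ?K' (Idm H' x, Idm H' x))) (Obj H')
      = restrict (fst (Rtil_fun X X' G) \<circ> fst (fcomp H' (transpose H X k) F)) (Obj H')"
  proof (rule restrict_ext)
    fix x assume x: "x \<in> Obj H'"
    let ?u = "Idm H (fst F x)"
    have Fx: "fst F x \<in> Obj H" "snd F (Idm H' x) = ?u" using is_functorD(5,9)[OF F x] by simp_all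
    have "(fst (Rtil_fun X X' G) \<circ> fst (fcomp H' (transpose H X k) F)) x
        = block_image X' G (block_of (Blocks X) (snd k (?u, ?u)))"
      unfolding Rtil_fun_eq fcomp_def transpose_def using x Fx K.transpose_obj by simp
    then show "block_of (Blocks X') (snd ?K' (Idm H' x, Idm H' x))
        = (fst (Rtil_fun X X' G) \<circ> fst (fcomp H' (transpose H X k) F)) x"
      using G_k[of "(?u, ?u)"] K' x Fx GH GH' by simp
  qed
  moreover have
    "restrict (\<lambda>f. Rtil_arr X' (block_of (Blocks X') (snd ?K' (Idm H' (Cod H' f), f)))) (Mor H')
      = restrict (snd (Rtil_fun X X' G) \<circ> snd (fcomp H' (transpose H X k) F)) (Mor H')"
  proof (rule restrict_ext)
    fix f assume f: "f \<in> Mor H'"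
    let ?u = "Idm H (Cod H (snd F f))"
    have Ff: "snd F f \<in> Mor H" "snd F (Idm H' (Cod H' f)) = ?u"
      using is_functorD(6,8,9)[OF F] f GH' by simp_all
    have "(snd (Rtil_fun X X' G) \<circ> snd (fcomp H' (transpose H X k) F)) f
        = Rtil_arr X' (block_image X' G (block_of (Blocks X) (snd k (?u, snd F f))))"
      unfolding fcomp_def transpose_def using f Ff M.Rtil_fun_arr K.transpose_block(1) GH by simp
    then show "Rtil_arr X' (block_of (Blocks X') (snd ?K' (Idm H' (Cod H' f), f)))
        = (snd (Rtil_fun X X' G) \<circ> snd (fcomp H' (transpose H X k) F)) f"
      using G_k[of "(?u, snd F f)"] K' f Ff GH GH' by simp
  qed
  ultimately show ?thesis unfolding transpose_def[of H' X'] fcomp_def[of H' "Rtil_fun X X' G"]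
    by simp
qed

section \<open>Essential surjectivity\<close>

context thin_schemoid
begin

lemma conn_hom:
  assumes c: "(x, y) \<in> conn C" and x: "x \<in> Obj C"
  shows "\<exists>m\<in>Mor C. Dom C m = x \<and> Cod C m = y"
  using c unfolding conn_def
proof (induction rule: rtrancl_induct)
  case base then show ?case using x cat by (intro bexI[of _ "Idm C x"]) simp_all
next
  case (step y z)
  obtain m where m: "m \<in> Mor C" "Dom C m = x" "Cod C m = y" using step.IH by blast
  obtain f where f: "f \<in> Mor C" "(y, z) = (Dom C f, Cod C f) \<or> (y, z) = (Cod C f, Dom C f)"
    using step.hyps(2) by blast
  then consider "y = Dom C f" "z = Cod C f" | "y = Cod C f" "z = Dom C f" by auto
  then show ?case
  proof cases
    case 1 then show ?thesis using m f gpd by (intro bexI[of _ "Comp C f m"]) simp_all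
  next
    case 2 then show ?thesis using m f gpd by (intro bexI[of _ "Comp C (ginv C f) m"]) simp_all
  qed
qed

definition base_point :: "'o \<Rightarrow> 'o" where
  "base_point x = (THE v. v \<in> Base X \<and> (x, v) \<in> conn C)"

definition to_base :: "'o \<Rightarrow> 'm" where
  "to_base x = the_hom C x (base_point x)"

definition to_base_block :: "'o \<Rightarrow> 'm set" where
  "to_base_block x = block_of S (to_base x)"

definition identity_block :: "'o \<Rightarrow> 'm set" where
  "identity_block v = block_of S (Idm C v)"

definition base_arr :: "'o \<Rightarrow> 'm set \<times> 'm set \<times> 'm set" where
  "base_arr x = Rtil_arr X (to_base_block x)"

text \<open>A copy of \<open>R~(X)\<close> on the base points: the object \<open>x\<close> of \<open>X\<close> stands for the block of the
  unique morphism from \<open>x\<close> to the base point of its component. It is needed because the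
  theorem asks for a groupoid whose objects and morphisms live in the object type of \<open>X\<close>.\<close>

definition base_gpd :: "('o, 'o) cat" where
  "base_gpd = \<lparr> Obj = Base X, Mor = Obj C,
     Dom = (\<lambda>x. the_inv_into (Base X) identity_block (src_block X (to_base_block x))),
     Cod = base_point, Idm = (\<lambda>v. v),
     Comp = (\<lambda>k f. the_inv_into (Obj C) base_arr (Comp (Rtil X) (base_arr k) (base_arr f))) \<rparr>"

lemma base_gpd_simps[simp]:
  "Obj base_gpd = Base X" "Mor base_gpd = Obj C" "Cod base_gpd = base_point"
  "Idm base_gpd = (\<lambda>v. v)"
  "Dom base_gpd = (\<lambda>x. the_inv_into (Base X) identity_block (src_block X (to_base_block x)))"
  "Comp base_gpd = (\<lambda>k f. the_inv_into (Obj C) base_arr (Comp (Rtil X) (base_arr k) (base_arr f)))"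
  unfolding base_gpd_def by simp_all

lemma base_point: "x \<in> Obj C \<Longrightarrow> base_point x \<in> Base X \<and> (x, base_point x) \<in> conn C"
  unfolding base_point_def using theI'[OF base_point_unique] by blast

lemma base_point_eq: "x \<in> Obj C \<Longrightarrow> v \<in> Base X \<Longrightarrow> (x, v) \<in> conn C \<Longrightarrow> base_point x = v"
  using base_point_unique base_point by blast

lemma base_point_base: "v \<in> Base X \<Longrightarrow> base_point v = v"
  using base_point_eq[of v v] Base_subset unfolding conn_def by blast

lemma base_point_mor: assumes m: "m \<in> Mor C" shows "base_point (Dom C m) = base_point (Cod C m)"
proof -
  have "(Dom C m, Cod C m) \<in> conn C" unfolding conn_def using m by blast
  then have "(Dom C m, base_point (Cod C m)) \<in> conn C"
    using base_point[of "Cod C m"] m cat unfolding conn_def by auto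
  then show ?thesis using base_point_eq base_point m cat by simp
qed

lemma the_hom_connected:
  assumes x: "x \<in> Obj C" and y: "y \<in> Obj C" and e: "base_point x = base_point y"
  shows "the_hom C x y \<in> Mor C" "Dom C (the_hom C x y) = x" "Cod C (the_hom C x y) = y"
proof -
  obtain m where "m \<in> Mor C" "Dom C m = x" "Cod C m = base_point x"
    using conn_hom base_point[OF x] x by blast
  moreover obtain n where "n \<in> Mor C" "Dom C n = y" "Cod C n = base_point y"
    using conn_hom base_point[OF y] y by blast
  ultimately have "Comp C (ginv C n) m \<in> Mor C" "Dom C (Comp C (ginv C n) m) = x"
    "Cod C (Comp C (ginv C n) m) = y"
    using e gpd by simp_all
  then show "the_hom C x y \<in> Mor C" "Dom C (the_hom C x y) = x" "Cod C (the_hom C x y) = y"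
    using the_hom_eq by simp_all
qed

lemma to_base:
  assumes x: "x \<in> Obj C"
  shows "to_base x \<in> Mor C" "Dom C (to_base x) = x" "Cod C (to_base x) = base_point x"
  unfolding to_base_def
  using the_hom_connected[OF x] base_point[OF x] Base_subset base_point_base by auto

lemma to_base_block:
  assumes "x \<in> Obj C" shows "to_base_block x \<in> S" "to_base x \<in> to_base_block x"
  unfolding to_base_block_def using to_base[OF assms] block_of_block mem_block_of by simp_all

lemma src_tgt_to_base_block:
  assumes x: "x \<in> Obj C"
  shows "src_block X (to_base_block x) = identity_block x"
    "tgt_block X (to_base_block x) = identity_block (base_point x)"
  unfolding identity_block_def
  using src_block_eq[OF to_base_block[OF x]] tgt_block_eq[OF to_base_block[OF x]] to_base[OF x]
  by simp_all

lemma identity_block_bij: "bij_betw identity_block (Base X) (S0 X)"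
  using unit_block_bij unfolding identity_block_def[abs_def] .

lemma base_arr_bij: "bij_betw base_arr (Obj C) (Mor (Rtil X))"
  unfolding bij_betw_def
proof
  show "inj_on base_arr (Obj C)"
  proof (rule inj_onI)
    fix x y assume x: "x \<in> Obj C" and y: "y \<in> Obj C" and e: "base_arr x = base_arr y"
    have b: "to_base_block x = to_base_block y" using e unfolding base_arr_def
      by (rule Rtil_arr_inj)
    then have "identity_block (base_point x) = identity_block (base_point y)"
      using src_tgt_to_base_block(2) x y by metis
    then have "base_point x = base_point y"
      using identity_block_bij base_point x y unfolding bij_betw_def inj_on_def by blast
    then have "to_base x = to_base y"
      using block_cod_inj[OF to_base_block(1)[OF y]] to_base_block(2) b to_base x y by metis
    then show "x = y" using to_base(2) x y by metis
  qed
  show "base_arr ` Obj C = Mor (Rtil X)"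
  proof (intro equalityI subsetI)
    fix t assume "t \<in> base_arr ` Obj C"
    then show "t \<in> Mor (Rtil X)" unfolding base_arr_def using Rtil_arr_mor to_base_block by blast
  next
    fix t assume "t \<in> Mor (Rtil X)"
    then obtain \<sigma> where s: "\<sigma> \<in> S" "t = Rtil_arr X \<sigma>" by (rule Rtil_mor_cases)
    obtain v where v: "v \<in> Base X" "identity_block v = tgt_block X \<sigma>"
      using identity_block_bij tgt_block_S0[OF s(1)] unfolding bij_betw_def by (metis imageE)
    have vo: "v \<in> Obj C" using v Base_subset by blast
    then have "Idm C v \<in> tgt_block X \<sigma>" using v unit_block unfolding identity_block_def by metis
    then obtain m where m: "m \<in> \<sigma>" "Cod C m = v" using block_has_cod[OF s(1) vo] by blast
    have mm: "m \<in> Mor C" using block_mor[OF s(1) m(1)] .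
    then have "base_point (Dom C m) = v" using base_point_mor base_point_base v m by metis
    then have "to_base (Dom C m) = m" unfolding to_base_def using the_hom_eq mm m by simp
    then have "base_arr (Dom C m) = t" unfolding base_arr_def to_base_block_def
      using block_of_eq' s m by simp
    then show "t \<in> base_arr ` Obj C" using mm cat by force
  qed
qed

lemma base_gpd_transport: "cat_transport base_gpd (Rtil X) identity_block base_arr"
proof
  show "groupoid (Rtil X)" by (rule Rtil_groupoid)
  show "bij_betw identity_block (Obj base_gpd) (Obj (Rtil X))" using identity_block_bij by simp
  show "bij_betw base_arr (Mor base_gpd) (Mor (Rtil X))" using base_arr_bij by simp
  have inv: "the_inv_into (Base X) identity_block \<alpha> \<in> Base X"
    "identity_block (the_inv_into (Base X) identity_block \<alpha>) = \<alpha>" if "\<alpha> \<in> S0 X" for \<alpha>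
    using that identity_block_bij the_inv_into_into f_the_inv_into_f unfolding bij_betw_def
    by (metis order_refl)+
  show "Dom base_gpd x \<in> Obj base_gpd \<and> identity_block (Dom base_gpd x) = Dom (Rtil X) (base_arr x)"
    if "x \<in> Mor base_gpd" for x
    using that inv src_block_S0 to_base_block unfolding base_arr_def by simp
  show "Cod base_gpd x \<in> Obj base_gpd \<and> identity_block (Cod base_gpd x) = Cod (Rtil X) (base_arr x)"
    if "x \<in> Mor base_gpd" for x
    using that base_point src_tgt_to_base_block unfolding base_arr_def by simp
  show "Idm base_gpd v \<in> Mor base_gpd \<and> base_arr (Idm base_gpd v) = Idm (Rtil X) (identity_block v)"
    if "v \<in> Obj base_gpd" for v
  proof -
    have v: "v \<in> Base X" "v \<in> Obj C" using that Base_subset by auto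
    then have "to_base_block v = identity_block v"
      unfolding to_base_block_def identity_block_def to_base_def using base_point_base the_hom_idm
      by simp
    then show ?thesis
      unfolding base_arr_def using Rtil_arr_S0 identity_block_bij v unfolding bij_betw_def by auto
  qed
  show "Comp base_gpd g f \<in> Mor base_gpd \<and>
      base_arr (Comp base_gpd g f) = Comp (Rtil X) (base_arr g) (base_arr f)"
    if f: "f \<in> Mor base_gpd" and g: "g \<in> Mor base_gpd" and fg: "Cod base_gpd f = Dom base_gpd g" for
      f g
  proof -
    have fo: "f \<in> Obj C" "g \<in> Obj C" using f g by auto
    have "Cod (Rtil X) (base_arr f) = Dom (Rtil X) (base_arr g)"
      using fg fo inv src_block_S0 to_base_block src_tgt_to_base_block(2) unfolding base_arr_def
      by simp
    then have "Comp (Rtil X) (base_arr g) (base_arr f) \<in> Mor (Rtil X)"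
      using cat_comp[OF Rtil_category] base_arr_bij fo unfolding bij_betw_def by blast
    then have i: "Comp (Rtil X) (base_arr g) (base_arr f) \<in> base_arr ` Obj C"
      using base_arr_bij unfolding bij_betw_def by simp
    have "inj_on base_arr (Obj C)" using base_arr_bij unfolding bij_betw_def by blast
    then show ?thesis using the_inv_into_into[OF _ i] f_the_inv_into_f[OF _ i] by simp
  qed
qed

end

context thin_schemoid
begin

lemma the_hom_comp:
  assumes "x \<in> Obj C" "y \<in> Obj C" "z \<in> Obj C" "base_point x = base_point y"
    "base_point y = base_point z"
  shows "the_hom C x z = Comp C (the_hom C y z) (the_hom C x y)"
  using the_hom_connected[of x y] the_hom_connected[of y z] assms cat by (intro the_hom_eq) simp_all

lemma the_hom_swap:
  assumes "x \<in> Obj C" "y \<in> Obj C" "base_point x = base_point y"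
  shows "the_hom C y x = ginv C (the_hom C x y)"
  using the_hom_connected[of x y] assms gpd by (intro the_hom_eq) simp_all

text \<open>Identifies the blocks of \<open>S~(base_gpd)\<close>, indexed by \<open>k\<^sup>-\<^sup>1 l\<close>, with the blocks of \<open>X\<close>.\<close>

lemma base_arr_Stil_index:
  assumes k: "k \<in> Obj C" and l: "l \<in> Obj C" and e: "base_point k = base_point l"
  shows "Comp base_gpd (ginv base_gpd k) l \<in> Obj C"
    "base_arr (Comp base_gpd (ginv base_gpd k) l) = Rtil_arr X (block_of S (the_hom C l k))"
proof -
  interpret T: cat_transport base_gpd "Rtil X" identity_block base_arr by (rule base_gpd_transport)
  have gk: "ginv base_gpd k \<in> Obj C"
    "base_arr (ginv base_gpd k) = Rtil_arr X (ginv C ` to_base_block k)"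
    using T.mor_map_ginv k Rtil_ginv to_base_block unfolding base_arr_def by auto
  have l': "l \<in> Mor base_gpd" and gk': "ginv base_gpd k \<in> Mor base_gpd" using l gk by simp_all
  have "Cod base_gpd l = Dom base_gpd (ginv base_gpd k)" using ginv_dom[OF T.groupoid] k e by simp
  note c = T.comp[OF l' gk' this]
  then show "Comp base_gpd (ginv base_gpd k) l \<in> Obj C" by simp
  have a: "ginv C (to_base k) \<in> ginv C ` to_base_block k" using to_base_block[OF k] by simp
  have "Dom C (ginv C (to_base k)) = Cod C (to_base l)" using to_base[OF k] to_base[OF l] e gpd
    by simp
  then have "base_arr (Comp base_gpd (ginv base_gpd k) l)
      = Rtil_arr X (block_of S (Comp C (ginv C (to_base k)) (to_base l)))"
    using conjunct2[OF c] gk(2)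
      Rtil_comp_arr[OF to_base_block(1)[OF l] ginv_block[OF to_base_block(1)[OF k]] a
        to_base_block(2)[OF l]]
    unfolding base_arr_def by simp
  moreover have "Comp C (ginv C (to_base k)) (to_base l) = the_hom C l k"
    using to_base[OF k] to_base[OF l] e gpd by (intro the_hom_eq[symmetric]) simp_all
  ultimately show
    "base_arr (Comp base_gpd (ginv base_gpd k) l) = Rtil_arr X (block_of S (the_hom C l k))"
    by simp
qed

definition Stil_base_to :: "('o \<Rightarrow> 'o) \<times> ('o \<times> 'o \<Rightarrow> 'm)" where
  "Stil_base_to =
    (restrict id (Obj C), restrict (\<lambda>(h, g). the_hom C g h) (Mor (Stil_cat base_gpd)))"

definition Stil_base_from :: "('o \<Rightarrow> 'o) \<times> ('m \<Rightarrow> 'o \<times> 'o)" where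
  "Stil_base_from = (restrict id (Obj C), restrict (\<lambda>m. (Cod C m, Dom C m)) (Mor C))"

lemma Stil_base_to_is_functor: "is_functor (Cat (Stil base_gpd)) C Stil_base_to"
  unfolding is_functor_def Stil_simps
proof (intro conjI ballI impI cat Stil_category)
  show "fst Stil_base_to \<in> extensional (Obj (Stil_cat base_gpd))"
    "snd Stil_base_to \<in> extensional (Mor (Stil_cat base_gpd))"
    unfolding Stil_base_to_def by simp_all
  fix x assume "x \<in> Obj (Stil_cat base_gpd)"
  then show "fst Stil_base_to x \<in> Obj C"
    "snd Stil_base_to (Idm (Stil_cat base_gpd) x) = Idm C (fst Stil_base_to x)"
    unfolding Stil_base_to_def using the_hom_idm by simp_all
next
  fix p assume "p \<in> Mor (Stil_cat base_gpd)"
  then show "snd Stil_base_to p \<in> Mor C"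
    "Dom C (snd Stil_base_to p) = fst Stil_base_to (Dom (Stil_cat base_gpd) p)"
    "Cod C (snd Stil_base_to p) = fst Stil_base_to (Cod (Stil_cat base_gpd) p)"
    unfolding Stil_base_to_def using the_hom_connected by auto
next
  fix p q assume p: "p \<in> Mor (Stil_cat base_gpd)" and q: "q \<in> Mor (Stil_cat base_gpd)"
    and pq: "Cod (Stil_cat base_gpd) p = Dom (Stil_cat base_gpd) q"
  obtain a b c where abc: "q = (a, b)" "p = (b, c)" using pq by (cases p, cases q) auto
  then show "snd Stil_base_to (Comp (Stil_cat base_gpd) q p)
      = Comp C (snd Stil_base_to q) (snd Stil_base_to p)"
    unfolding Stil_base_to_def using p q the_hom_comp[of c b a] by auto
qed

lemma Stil_base_to_smd_morph: "smd_morph (Stil base_gpd) X Stil_base_to"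
proof -
  have blocks: "snd Stil_base_to ` Stil_block base_gpd f \<subseteq> to_base_block f" if f: "f \<in> Obj C" for f
  proof
    fix q assume "q \<in> snd Stil_base_to ` Stil_block base_gpd f"
    then obtain k l where kl: "k \<in> Obj C" "l \<in> Obj C" "base_point k = base_point l"
        "Comp base_gpd (ginv base_gpd k) l = f" "q = snd Stil_base_to (k, l)"
      unfolding Stil_block_def by auto
    then have "to_base_block f = block_of S (the_hom C l k)"
      using base_arr_Stil_index[OF kl(1-3)] unfolding base_arr_def by (simp add: Rtil_arr_inj)
    then show "q \<in> to_base_block f"
      using kl mem_block_of the_hom_connected[of l k] unfolding Stil_base_to_def by simp
  qed
  have "\<forall>\<sigma>\<in>Blocks (Stil base_gpd). \<exists>\<tau>\<in>S. snd Stil_base_to ` \<sigma> \<subseteq> \<tau>"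
  proof
    fix \<sigma> assume "\<sigma> \<in> Blocks (Stil base_gpd)"
    then obtain f where f: "f \<in> Obj C" "\<sigma> = Stil_block base_gpd f" by auto
    then show "\<exists>\<tau>\<in>S. snd Stil_base_to ` \<sigma> \<subseteq> \<tau>" using blocks[OF f(1)] to_base_block[OF f(1)] by blast
  qed
  moreover have "\<forall>p\<in>Mor (Cat (Stil base_gpd)).
      snd Stil_base_to (Tmor (Stil base_gpd) p) = Tmor X (snd Stil_base_to p)"
  proof
    fix p assume "p \<in> Mor (Cat (Stil base_gpd))"
    then obtain h g where hg: "p = (h, g)" "h \<in> Obj C" "g \<in> Obj C" "base_point h = base_point g"
      by auto
    then show "snd Stil_base_to (Tmor (Stil base_gpd) p) = Tmor X (snd Stil_base_to p)"
      unfolding Stil_base_to_def using the_hom_swap[of g h] Tmor_eq_ginv the_hom_connected[of g h]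
      by simp
  qed
  moreover have "\<forall>x\<in>Obj (Cat (Stil base_gpd)).
      fst Stil_base_to (Tob (Stil base_gpd) x) = Tob X (fst Stil_base_to x)"
    unfolding Stil_base_to_def using Tob_eq by simp
  moreover have "fst Stil_base_to ` Base (Stil base_gpd) \<subseteq> Base X"
    unfolding Stil_base_to_def using Base_subset by auto
  ultimately show ?thesis unfolding smd_morph_def using Stil_base_to_is_functor by blast
qed

lemma Stil_base_from_is_functor: "is_functor (Cat X) (Cat (Stil base_gpd)) Stil_base_from"
  unfolding is_functor_def Stil_simps Stil_base_from_def
  using Stil_category base_point_mor cat by (auto simp: cat_comp)

lemma Stil_base_from_smd_morph: "smd_morph X (Stil base_gpd) Stil_base_from"
proof -
  have "\<exists>\<tau>\<in>Blocks (Stil base_gpd). snd Stil_base_from ` \<sigma> \<subseteq> \<tau>" if s: "\<sigma> \<in> S" for \<sigma>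
  proof -
    obtain f where f: "f \<in> Obj C" "base_arr f = Rtil_arr X \<sigma>"
      using Rtil_arr_mor[OF s] base_arr_bij unfolding bij_betw_def by (metis imageE)
    have "snd Stil_base_from ` \<sigma> \<subseteq> Stil_block base_gpd f"
    proof
      fix q assume "q \<in> snd Stil_base_from ` \<sigma>"
      then obtain m where m: "m \<in> \<sigma>" "q = (Cod C m, Dom C m)"
        using block_mor[OF s] unfolding Stil_base_from_def by auto
      have mm: "m \<in> Mor C" "Cod C m \<in> Obj C" "Dom C m \<in> Obj C"
        "base_point (Cod C m) = base_point (Dom C m)"
        using block_mor[OF s m(1)] base_point_mor cat by auto
      have "base_arr (Comp base_gpd (ginv base_gpd (Cod C m)) (Dom C m)) = base_arr f"
        using base_arr_Stil_index[OF mm(2-4)] the_hom_eq[OF mm(1)] block_of_eq'[OF s m(1)] f(2)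
        by simp
      then have "Comp base_gpd (ginv base_gpd (Cod C m)) (Dom C m) = f"
        using base_arr_bij base_arr_Stil_index(1)[OF mm(2-4)] f(1) unfolding bij_betw_def inj_on_def
        by blast
      then show "q \<in> Stil_block base_gpd f" unfolding Stil_block_def using m mm by simp
    qed
    then show ?thesis using f(1) by auto
  qed
  moreover have
    "\<forall>f\<in>Mor C. snd Stil_base_from (Tmor X f) = Tmor (Stil base_gpd) (snd Stil_base_from f)"
    unfolding Stil_base_from_def using Tmor_eq_ginv gpd by simp
  moreover have
    "\<forall>x\<in>Obj C. fst Stil_base_from (Tob X x) = Tob (Stil base_gpd) (fst Stil_base_from x)"
    unfolding Stil_base_from_def using Tob_eq by simp
  moreover have "fst Stil_base_from ` Base X \<subseteq> Base (Stil base_gpd)"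
    unfolding Stil_base_from_def using Base_subset by auto
  ultimately show ?thesis unfolding smd_morph_def using Stil_base_from_is_functor by blast
qed

lemma Stil_base_iso: "smd_iso (Stil base_gpd) X"
  unfolding smd_iso_def smd_hom_def
proof (intro exI[of _ Stil_base_to] exI[of _ Stil_base_from] conjI CollectI)
  show "smd_morph (Stil base_gpd) X Stil_base_to" by (rule Stil_base_to_smd_morph)
  show "smd_morph X (Stil base_gpd) Stil_base_from" by (rule Stil_base_from_smd_morph)
  show "fcomp (Cat (Stil base_gpd)) Stil_base_from Stil_base_to = fid (Cat (Stil base_gpd))"
    unfolding fcomp_def fid_def Stil_base_from_def Stil_base_to_def
    using the_hom_connected by (auto intro!: restrict_ext)
  show "fcomp (Cat X) Stil_base_to Stil_base_from = fid (Cat X)"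
    unfolding fcomp_def fid_def Stil_base_from_def Stil_base_to_def
    using the_hom_eq base_point_mor cat by (auto intro!: restrict_ext)
qed

end

lemma thin_smd_Rtil_groupoid: "thin_smd X \<Longrightarrow> groupoid (Rtil X)"
  using thin_schemoid.Rtil_groupoid thin_schemoid.intro by blast

lemma thin_smd_ess_surj:
  fixes X :: "('p, 'n) schemoid"
  assumes "thin_smd X"
  shows "\<exists>H :: ('p, 'p) cat. groupoid H \<and> smd_iso (Stil H) X"
proof -
  interpret thin_schemoid X by (rule thin_schemoid.intro) (rule assms)
  show ?thesis
    by (intro exI[of _ base_gpd] conjI cat_transport.groupoid[OF base_gpd_transport] Stil_base_iso)
qed

theorem theorem4p11:
  shows
  "\<comment> \<open>S~ is a functor Gpd -> (tASmd)_0\<close>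
   (\<forall>H :: ('o,'m) cat. groupoid H \<longrightarrow> thin_smd (Stil H)) \<and>
   (\<forall>(H :: ('o,'m) cat) (K :: ('o2,'m2) cat) F.
      groupoid H \<longrightarrow> groupoid K \<longrightarrow> F \<in> gpd_hom H K \<longrightarrow>
      Stil_fun H F \<in> smd_hom (Stil H) (Stil K)) \<and>
   (\<forall>H :: ('o,'m) cat. groupoid H \<longrightarrow> Stil_fun H (fid H) = fid (Cat (Stil H))) \<and>
   (\<forall>(H :: ('o,'m) cat) (K :: ('o2,'m2) cat) (L :: ('o3,'m3) cat) F G.
      groupoid H \<longrightarrow> groupoid K \<longrightarrow> groupoid L \<longrightarrow> F \<in> gpd_hom H K \<longrightarrow> G \<in> gpd_hom K L \<longrightarrow>
      Stil_fun H (fcomp H G F) = fcomp (Cat (Stil H)) (Stil_fun K G) (Stil_fun H F)) \<and>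
   \<comment> \<open>S~ is an equivalence: fully faithful and essentially surjective\<close>
   (\<forall>(H :: ('o,'m) cat) (K :: ('o2,'m2) cat).
      groupoid H \<longrightarrow> groupoid K \<longrightarrow>
      bij_betw (Stil_fun H) (gpd_hom H K) (smd_hom (Stil H) (Stil K))) \<and>
   (\<forall>X :: ('p,'n) schemoid. thin_smd X \<longrightarrow>
      (\<exists>H :: ('p,'p) cat. groupoid H \<and> smd_iso (Stil H) X)) \<and>
   \<comment> \<open>R~ is a functor (tASmd)_0 -> Gpd\<close>
   (\<forall>X :: ('p,'n) schemoid. thin_smd X \<longrightarrow> groupoid (Rtil X)) \<and>
   (\<forall>(X :: ('p,'n) schemoid) (Y :: ('p2,'n2) schemoid) F.
      thin_smd X \<longrightarrow> thin_smd Y \<longrightarrow> F \<in> smd_hom X Y \<longrightarrow>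
      Rtil_fun X Y F \<in> gpd_hom (Rtil X) (Rtil Y)) \<and>
   (\<forall>X :: ('p,'n) schemoid. thin_smd X \<longrightarrow> Rtil_fun X X (fid (Cat X)) = fid (Rtil X)) \<and>
   (\<forall>(X :: ('p,'n) schemoid) (Y :: ('p2,'n2) schemoid) (Z :: ('p3,'n3) schemoid) F G.
      thin_smd X \<longrightarrow> thin_smd Y \<longrightarrow> thin_smd Z \<longrightarrow> F \<in> smd_hom X Y \<longrightarrow> G \<in> smd_hom Y Z \<longrightarrow>
      Rtil_fun X Z (fcomp (Cat X) G F) = fcomp (Rtil X) (Rtil_fun Y Z G) (Rtil_fun X Y F)) \<and>
   \<comment> \<open>R~ is right adjoint to S~: natural bijection Hom(S~ H, X) = Hom(H, R~ X)\<close>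
   (\<exists>\<phi> :: ('o,'m) cat \<Rightarrow> ('p,'n) schemoid \<Rightarrow> ('m \<Rightarrow> 'p) \<times> ('m \<times> 'm \<Rightarrow> 'n)
            \<Rightarrow> ('o \<Rightarrow> 'n set) \<times> ('m \<Rightarrow> 'n set \<times> 'n set \<times> 'n set).
      (\<forall>H X. groupoid H \<longrightarrow> thin_smd X \<longrightarrow>
         bij_betw (\<phi> H X) (smd_hom (Stil H) X) (gpd_hom H (Rtil X))) \<and>
      (\<forall>H H' X X' F G k. groupoid H \<longrightarrow> groupoid H' \<longrightarrow> thin_smd X \<longrightarrow> thin_smd X' \<longrightarrow>
         F \<in> gpd_hom H' H \<longrightarrow> G \<in> smd_hom X X' \<longrightarrow> k \<in> smd_hom (Stil H) X \<longrightarrow>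
         \<phi> H' X' (fcomp (Cat (Stil H')) G (fcomp (Cat (Stil H')) k (Stil_fun H' F)))
           = fcomp H' (Rtil_fun X X' G) (fcomp H' (\<phi> H X k) F)))"
  using Stil_thin Stil_fun_smd_morph Stil_fun_fid Stil_fun_fcomp Stil_fun_bij thin_smd_ess_surj
    thin_smd_Rtil_groupoid Rtil_fun_in_gpd_hom Rtil_fun_fid Rtil_fun_fcomp transpose_bij
      transpose_natural
  unfolding gpd_hom_def smd_hom_def mem_Collect_eq
  by (intro conjI exI[of _ transpose]) blast+

end
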